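(* Let $0<\alpha<n$, $1<p<n/\alpha$, $1/q=1/p-\alpha/n$, $0<\kappa<p/q$, and let $w$ be a weight with $w^{q/p}\in A_1$ and $r_w>\frac{1-\kappa}{p/q-\kappa}$. Then there is $C$ such that $$\|M_w f\|_{L^{q,\kappa q/p}(w^{q/p},w)}\le C\|f\|_{L^{q,\kappa q/p}(w^{q/p},w)}.$$
   Context: All cubes have sides parallel to the axes. A weight is a locally integrable function positive a.e.; $u(Q)=\int_Q u$. $w\in A_1$ means $\frac1{|Q|}\int_Q w\le C\,\mathrm{ess\,inf}_Q w$ for all cubes $Q$. $w\in RH_r$ ($r>1$) means $\big(\frac1{|Q|}\int_Q w^r\big)^{1/r}\le C\frac1{|Q|}\int_Q w$ for all cubes; $r_w=\sup\{r>1:w\in RH_r\}$. The weighted maximal operator is $M_wf(x)=\sup_{Q\ni x}\frac1{w(Q)}\int_Q|f(y)|w(y)\,dy$. For $1\le p<\infty$, $0<\kappa<1$ and weights $u,v$, $\|f\|_{L^{p,\kappa}(u,v)}=\sup_Q\big(\frac1{v(Q)^\kappa}\int_Q|f|^pu\big)^{1/p}$. *)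

theory Defs
  imports "HOL-Analysis.Analysis"
begin

text \<open>Cubes with sides parallel to the axes (closed; boundaries are null sets).\<close>
definition is_cube :: "'a::euclidean_space set \<Rightarrow> bool" where
  "is_cube Q \<longleftrightarrow> (\<exists>a l. l > 0 \<and> Q = cbox a (a + l *\<^sub>R One))"

definition is_weight :: "('a::euclidean_space \<Rightarrow> real) \<Rightarrow> bool" where
  "is_weight w \<longleftrightarrow> w \<in> borel_measurable lebesgue \<and> (AE x in lebesgue. w x > 0) \<and>
     (\<forall>Q. is_cube Q \<longrightarrow> set_integrable lebesgue Q w)"

definition wmeas :: "('a::euclidean_space \<Rightarrow> real) \<Rightarrow> 'a set \<Rightarrow> real" where
  "wmeas u Q = (LINT x:Q|lebesgue. u x)"

text \<open>Muckenhoupt A_1: average over Q bounded by C times ess inf over Q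
  (written as the a.e. inequality on Q, which is what \<open>\<le> C ess inf\<close> means).\<close>
definition A1 :: "('a::euclidean_space \<Rightarrow> real) \<Rightarrow> bool" where
  "A1 w \<longleftrightarrow> is_weight w \<and> (\<exists>C. \<forall>Q. is_cube Q \<longrightarrow>
     (AE x in lebesgue. x \<in> Q \<longrightarrow> wmeas w Q / measure lebesgue Q \<le> C * w x))"

definition RH :: "real \<Rightarrow> ('a::euclidean_space \<Rightarrow> real) \<Rightarrow> bool" where
  "RH r w \<longleftrightarrow> (\<exists>C. \<forall>Q. is_cube Q \<longrightarrow>
     set_integrable lebesgue Q (\<lambda>x. w x powr r) \<and>
     ((LINT x:Q|lebesgue. w x powr r) / measure lebesgue Q) powr (1 / r)
        \<le> C * (wmeas w Q / measure lebesgue Q))"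

definition r_w :: "('a::euclidean_space \<Rightarrow> real) \<Rightarrow> ereal" where
  "r_w w = Sup (ereal ` {r. r > 1 \<and> RH r w})"

text \<open>Real powers of extended nonnegative reals (a > 0): \<infinity> ^ a = \<infinity>.\<close>
definition enn_powr :: "ennreal \<Rightarrow> real \<Rightarrow> ennreal" where
  "enn_powr x a = (if x = top then top else ennreal (enn2real x powr a))"

definition Mw :: "('a::euclidean_space \<Rightarrow> real) \<Rightarrow> ('a \<Rightarrow> real) \<Rightarrow> 'a \<Rightarrow> ennreal" where
  "Mw w f x = (SUP Q\<in>{Q. is_cube Q \<and> x \<in> Q}.
      (\<integral>\<^sup>+ y. ennreal (\<bar>f y\<bar> * w y) * indicator Q y \<partial>lebesgue) / ennreal (wmeas w Q))"

definition morrey_norm :: "real \<Rightarrow> real \<Rightarrow> ('a::euclidean_space \<Rightarrow> real) \<Rightarrow> ('a \<Rightarrow> real)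
    \<Rightarrow> ('a \<Rightarrow> ennreal) \<Rightarrow> ennreal" where
  "morrey_norm p \<kappa> u v g = (SUP Q\<in>{Q. is_cube Q}.
      enn_powr ((\<integral>\<^sup>+ x. enn_powr (g x) p * ennreal (u x) * indicator Q x \<partial>lebesgue)
                 / ennreal (wmeas v Q powr \<kappa>)) (1 / p))"

end

theory Submission
  imports Defs
begin

(*
  The proof follows the classical two-step scheme.
  (1) Global theory: since v = w^s is an A_1 weight, on every cube Q one has
      v(Q)/w(Q) \<le> C1 w^(s-1) a.e. on Q, and w is doubling.  Consequently M_w is of
      weak type (1,1) from L^1(v) to L^{1,\<infinity>}(v) (Vitali covering argument), and
      by the layer-cake formula M_w is bounded on L^q(v) for every q > 1.
  (2) Localisation: for a cube Q_0 split f = f 1_{3Q_0} + f 1_{(3Q_0)^c}.  The near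
      part is controlled by the L^q(v) bound.  On Q_0 the far part only sees cubes
      Q at least as large as Q_0; there Jensen's inequality, the A_1 bound and the
      reverse Hoelder inequality of w (with exponent r > (1-\<kappa>)/(p/q-\<kappa>)) give a
      pointwise bound of size (w(Q_0)^(ks) / v(Q_0))^(1/q) times the Morrey norm.
  Integrating over Q_0 yields the local Morrey estimate; the supremum over all cubes
  gives the theorem.
*)

definition cube :: "'a::euclidean_space \<Rightarrow> real \<Rightarrow> 'a set" where
  "cube a l = cbox a (a + l *\<^sub>R One)"

lemma is_cube_iff: "is_cube Q \<longleftrightarrow> (\<exists>a l. l > 0 \<and> Q = cube a l)"
  by (simp add: is_cube_def cube_def)

lemma mem_cube: "x \<in> cube a l \<longleftrightarrow> (\<forall>i\<in>Basis. a \<bullet> i \<le> x \<bullet> i \<and> x \<bullet> i \<le> a \<bullet> i + l)"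
  by (simp add: cube_def mem_box inner_add_left)

lemma cube_sets[measurable]: "cube a l \<in> sets lebesgue"
  by (simp add: cube_def)

lemma measure_cube: "l \<ge> 0 \<Longrightarrow> measure lebesgue (cube a l) = l ^ DIM('a)"
  for a :: "'a::euclidean_space"
  by (simp add: cube_def measure_lborel_cbox_eq inner_add_left inner_diff_left prod_constant)

lemma emeasure_cube: "l \<ge> 0 \<Longrightarrow> emeasure lebesgue (cube a l) = ennreal (l ^ DIM('a))"
  for a :: "'a::euclidean_space"
  by (simp add: cube_def emeasure_lborel_cbox_eq inner_add_left inner_diff_left prod_constant)

lemma cube_corner: "l \<ge> 0 \<Longrightarrow> a \<in> cube a l"
  by (simp add: mem_cube)

lemma box_subset_cube: "box a (a + l *\<^sub>R One) \<subseteq> cube a l"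
  by (simp add: cube_def box_subset_cbox)

(* A cube of side m meeting a cube of side l \<ge> m lies in the concentric triple of the
   latter; this is the geometric fact behind the Vitali covering lemma. *)
lemma cube_subset_triple_of_meeting:
  assumes "y \<in> cube a l" "y \<in> cube b m" "m \<le> l"
  shows "cube b m \<subseteq> cube (a - l *\<^sub>R One) (3 * l)"
  using assms unfolding mem_cube subset_iff
  by (auto simp: inner_diff_left) (smt (verit, best))+

lemma cube_subset_enlarged:
  fixes a :: "'a::euclidean_space"
  assumes "e \<ge> 0" shows "cube a l \<subseteq> cube (a - e *\<^sub>R One) (l + 2 * e)"
  using assms unfolding mem_cube subset_iff by (auto simp: inner_diff_left)

lemma cube_subset_triple: "l \<ge> 0 \<Longrightarrow> cube a l \<subseteq> cube (a - l *\<^sub>R One) (3 * l)"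
  using cube_subset_enlarged[of l a l] by simp

lemma cube_in_box_enlarged:
  fixes a :: "'a::euclidean_space"
  assumes "x \<in> cube a l" "e > 0"
  shows "x \<in> box (a - e *\<^sub>R One) ((a - e *\<^sub>R One) + (l + 2 * e) *\<^sub>R One)"
  using assms by (auto simp: mem_cube mem_box inner_diff_left inner_add_left)

lemma Inter_enlarged_cubes:
  fixes a :: "'a::euclidean_space"
  shows "(\<Inter>k. cube (a - (1 / Suc k) *\<^sub>R One) (l + 2 * (1 / Suc k))) = cube a l"
proof (intro equalityI subsetI)
  fix x assume x: "x \<in> (\<Inter>k. cube (a - (1 / Suc k) *\<^sub>R One) (l + 2 * (1 / Suc k)))"
  have h: "a \<bullet> i - 1 / Suc k \<le> x \<bullet> i \<and> x \<bullet> i \<le> a \<bullet> i + l + 1 / Suc k" if i: "i \<in> Basis" for i k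
  proof -
    have "x \<in> cube (a - (1 / Suc k) *\<^sub>R One) (l + 2 * (1 / Suc k))" using x by blast
    then show ?thesis using i unfolding mem_cube by (auto simp: inner_diff_left)
  qed
  have "a \<bullet> i \<le> x \<bullet> i \<and> x \<bullet> i \<le> a \<bullet> i + l" if i: "i \<in> Basis" for i
  proof -
    have "a \<bullet> i \<le> x \<bullet> i + e \<and> x \<bullet> i \<le> a \<bullet> i + l + e" if e: "e > 0" for e
    proof -
      obtain k where "1 / Suc k < e" using e by (metis nat_approx_posE)
      then show ?thesis using h[OF i, of k] by linarith
    qed
    then show ?thesis by (meson field_le_epsilon)
  qed
  then show "x \<in> cube a l" by (simp add: mem_cube)
next
  fix x assume "x \<in> cube a l"
  then show "x \<in> (\<Inter>k. cube (a - (1 / Suc k) *\<^sub>R One) (l + 2 * (1 / Suc k)))"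
    using cube_subset_enlarged[of "1 / Suc k" a l for k] by auto
qed

lemma sigma_finite_lebesgue: "sigma_finite_measure (lebesgue :: 'a::euclidean_space measure)"
proof -
  obtain A :: "'a set set" where A: "countable A" "A \<subseteq> sets lborel" "\<Union>A = space lborel"
    "\<forall>a\<in>A. emeasure lborel a \<noteq> \<infinity>"
    using sigma_finite_measure.sigma_finite_countable[OF sigma_finite_lborel] by metis
  show ?thesis unfolding sigma_finite_measure_def
    by (rule exI[of _ A]) (use A in auto)
qed

lemma powr_tangent_line:
  fixes f b s :: real
  assumes "f \<ge> 0" "b > 0" "s \<ge> 1"
  shows "s * b powr (s - 1) * f \<le> f powr s + (s - 1) * b powr s"
proof (cases "s = 1")
  case True then show ?thesis using assms by simp
next
  case False
  then have s1: "s > 1" using assms by simp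
  have q1: "s / (s - 1) > 1" using s1 by (simp add: field_simps)
  have conj: "1 / s + 1 / (s / (s - 1)) = 1" using s1 by (simp add: field_simps)
  have "f * b powr (s - 1) \<le> f powr s / s + (b powr (s - 1)) powr (s / (s - 1)) / (s / (s - 1))"
    using Youngs_inequality[OF s1 q1 conj] assms by simp
  also have "(b powr (s - 1)) powr (s / (s - 1)) = b powr s"
    using s1 assms by (simp add: powr_powr)
  finally have "f * b powr (s - 1) \<le> (f powr s + b powr s * (s - 1)) / s"
    using s1 by (simp add: field_simps)
  then show ?thesis using s1 by (simp add: pos_le_divide_eq algebra_simps)
qed

lemma nn_integral_tangent_line:
  fixes f \<rho> :: "'b \<Rightarrow> real"
  assumes s: "s \<ge> 1" and b: "b > 0"
    and meas: "f \<in> borel_measurable M" "\<rho> \<in> borel_measurable M" and A: "A \<in> sets M"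
    and nn: "AE x in M. x \<in> A \<longrightarrow> 0 \<le> f x \<and> 0 \<le> \<rho> x"
  shows "ennreal (s * b powr (s - 1)) * (\<integral>\<^sup>+ x. ennreal (f x * \<rho> x) * indicator A x \<partial>M)
     \<le> (\<integral>\<^sup>+ x. ennreal (f x powr s * \<rho> x) * indicator A x \<partial>M)
        + ennreal ((s - 1) * b powr s) * (\<integral>\<^sup>+ x. ennreal (\<rho> x) * indicator A x \<partial>M)"
proof -
  have "ennreal (s * b powr (s - 1)) * (\<integral>\<^sup>+ x. ennreal (f x * \<rho> x) * indicator A x \<partial>M)
      = (\<integral>\<^sup>+ x. ennreal (s * b powr (s - 1)) * (ennreal (f x * \<rho> x) * indicator A x) \<partial>M)"
    using meas A by (intro nn_integral_cmult[symmetric]) auto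
  also have "\<dots> \<le> (\<integral>\<^sup>+ x. ennreal (f x powr s * \<rho> x) * indicator A x
                 + ennreal ((s - 1) * b powr s) * (ennreal (\<rho> x) * indicator A x) \<partial>M)"
  proof (rule nn_integral_mono_AE)
    show "AE x in M. ennreal (s * b powr (s - 1)) * (ennreal (f x * \<rho> x) * indicator A x)
      \<le> ennreal (f x powr s * \<rho> x) * indicator A x + ennreal ((s - 1) * b powr s) * (ennreal (\<rho> x) * indicator A x)"
      using nn
    proof eventually_elim
      case (elim x)
      show ?case
      proof (cases "x \<in> A")
        case True
        have "s * b powr (s - 1) * f x * \<rho> x \<le> (f x powr s + (s - 1) * b powr s) * \<rho> x"
          using powr_tangent_line[of "f x" b s] elim True b s by (intro mult_right_mono) auto
        then have "s * b powr (s - 1) * (f x * \<rho> x) \<le> f x powr s * \<rho> x + (s - 1) * b powr s * \<rho> x"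
          by (simp add: algebra_simps)
        then show ?thesis using True elim s b
          by (simp add: ennreal_plus[symmetric] ennreal_mult[symmetric] del: ennreal_plus)
      qed simp
    qed
  qed
  also have "\<dots> = (\<integral>\<^sup>+ x. ennreal (f x powr s * \<rho> x) * indicator A x \<partial>M)
        + ennreal ((s - 1) * b powr s) * (\<integral>\<^sup>+ x. ennreal (\<rho> x) * indicator A x \<partial>M)"
    using meas A by (subst nn_integral_add) (auto simp: nn_integral_cmult)
  finally show ?thesis .
qed

lemma tangent_line_at_ratio:
  fixes F R B s :: real
  assumes F: "F > 0" and R: "R > 0" and s: "s \<ge> 1"
    and tangent: "s * (F / R) powr (s - 1) * F \<le> B + (s - 1) * (F / R) powr s * R"
  shows "F powr s \<le> R powr (s - 1) * B"
proof -
  define b where "b = F / R"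
  have b: "b > 0" and Fb: "F = b * R" using F R by (simp_all add: b_def)
  have "s * b powr (s - 1) * F = s * (b powr s * R)" using Fb b by (simp add: powr_diff field_simps)
  moreover have "(s - 1) * b powr s * R = s * (b powr s * R) - b powr s * R" by (simp add: algebra_simps)
  ultimately have key: "b powr s * R \<le> B" using tangent unfolding b_def[symmetric] by linarith
  have "F powr s = R powr (s - 1) * (b powr s * R)"
    using Fb b R by (simp add: powr_mult powr_diff field_simps)
  also have "\<dots> \<le> R powr (s - 1) * B" using key R by (intro mult_left_mono) auto
  finally show ?thesis .
qed

(* It follows from the integrated tangent line at
   b = (\<integral>_A f \<rho>)/R; the choice b = 1 first shows that the left side is finite. *)
lemma jensen_powr_nn_integral:
  fixes f \<rho> :: "'b \<Rightarrow> real"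
  assumes s: "s \<ge> 1"
    and meas: "f \<in> borel_measurable M" "\<rho> \<in> borel_measurable M" and A: "A \<in> sets M"
    and nn: "AE x in M. x \<in> A \<longrightarrow> 0 \<le> f x \<and> 0 \<le> \<rho> x"
    and R: "(\<integral>\<^sup>+ x. ennreal (\<rho> x) * indicator A x \<partial>M) = ennreal R" "R > 0"
  shows "enn_powr (\<integral>\<^sup>+ x. ennreal (f x * \<rho> x) * indicator A x \<partial>M) s
         \<le> ennreal (R powr (s - 1)) * (\<integral>\<^sup>+ x. ennreal (f x powr s * \<rho> x) * indicator A x \<partial>M)"
proof -
  define Fi where "Fi = (\<integral>\<^sup>+ x. ennreal (f x * \<rho> x) * indicator A x \<partial>M)"
  define B where "B = (\<integral>\<^sup>+ x. ennreal (f x powr s * \<rho> x) * indicator A x \<partial>M)"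
  have tangent: "ennreal (s * b powr (s - 1)) * Fi \<le> B + ennreal ((s - 1) * b powr s) * ennreal R"
    if "b > 0" for b
    using nn_integral_tangent_line[OF s that meas A nn] unfolding Fi_def B_def R(1) .
  have Rp: "R powr (s - 1) > 0" using R by simp
  show ?thesis
  proof (cases "B = top")
    case True
    then show ?thesis using Rp unfolding B_def[symmetric] Fi_def[symmetric]
      by (simp add: ennreal_mult_top)
  next
    case False
    then obtain Br where Br: "B = ennreal Br" "Br \<ge> 0" by (cases B) auto
    have "ennreal s * Fi \<le> ennreal (Br + (s - 1) * R)"
      using tangent[of 1] Br s R by (simp add: ennreal_mult ennreal_plus)
    then have "Fi \<noteq> top" using s by (auto simp: ennreal_mult_top top_unique)
    then obtain F where F: "Fi = ennreal F" "F \<ge> 0" by (cases Fi) auto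
    show ?thesis
    proof (cases "F = 0")
      case True
      then show ?thesis unfolding Fi_def[symmetric] F using s by (simp add: enn_powr_def)
    next
      case False
      then have "F > 0" using F by simp
      then have "F powr s \<le> R powr (s - 1) * Br"
        using tangent[of "F / R"] R s F Br
        by (intro tangent_line_at_ratio) (simp_all add: ennreal_mult[symmetric] ennreal_plus[symmetric] del: ennreal_plus)
      then show ?thesis unfolding Fi_def[symmetric] B_def[symmetric] F Br
        using Rp Br F(2) by (simp add: enn_powr_def ennreal_mult[symmetric])
    qed
  qed
qed

lemma AE_in_set_imp_ex:
  assumes "AE x in M. x \<in> Q \<longrightarrow> P x" "Q \<in> sets M" "emeasure M Q \<noteq> 0"
  shows "\<exists>x\<in>Q. P x"
proof (rule ccontr)
  assume "\<not> ?thesis"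
  then have "AE x in M. x \<notin> Q" using assms(1) by (auto elim: eventually_mono)
  then have "emeasure M Q = 0"
    using AE_iff_measurable[OF assms(2), of "\<lambda>x. x \<notin> Q"] sets.sets_into_space[OF assms(2)] by auto
  then show False using assms(3) by simp
qed

lemma weight_cube_integral:
  fixes u :: "'a::euclidean_space \<Rightarrow> real"
  assumes u: "is_weight u" and l: "l > 0"
  shows "(\<integral>\<^sup>+ x. ennreal (u x) * indicator (cube a l) x \<partial>lebesgue) = ennreal (wmeas u (cube a l))"
    and "wmeas u (cube a l) > 0"
proof -
  have int: "set_integrable lebesgue (cube a l) u"
    using u l unfolding is_weight_def is_cube_iff by blast
  have meas: "u \<in> borel_measurable lebesgue" using u by (simp add: is_weight_def)
  have pos: "AE x in lebesgue. 0 < u x" using u by (simp add: is_weight_def)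
  have "(\<integral>\<^sup>+ x. ennreal (u x) * indicator (cube a l) x \<partial>lebesgue)
      = (\<integral>\<^sup>+ x. ennreal (indicator (cube a l) x *\<^sub>R u x) \<partial>lebesgue)"
    by (intro nn_integral_cong) (auto simp: indicator_def)
  also have "\<dots> = ennreal (integral\<^sup>L lebesgue (\<lambda>x. indicator (cube a l) x *\<^sub>R u x))"
    using int pos unfolding set_integrable_def
    by (intro nn_integral_eq_integral) (auto elim!: eventually_mono simp: indicator_def)
  finally show I: "(\<integral>\<^sup>+ x. ennreal (u x) * indicator (cube a l) x \<partial>lebesgue) = ennreal (wmeas u (cube a l))"
    by (simp add: wmeas_def set_lebesgue_integral_def)
  have ge: "wmeas u (cube a l) \<ge> 0"
    unfolding wmeas_def set_lebesgue_integral_def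
    by (rule integral_nonneg_AE) (use pos in \<open>auto elim!: eventually_mono simp: indicator_def\<close>)
  show "wmeas u (cube a l) > 0"
  proof (rule ccontr)
    assume "\<not> ?thesis"
    then have "(\<integral>\<^sup>+ x. ennreal (u x) * indicator (cube a l) x \<partial>lebesgue) = 0" using I ge by simp
    then have "AE x in lebesgue. ennreal (u x) * indicator (cube a l) x = 0"
      using meas by (subst (asm) nn_integral_0_iff_AE) auto
    then have "AE x in lebesgue. x \<in> cube a l \<longrightarrow> False"
      using pos by eventually_elim (auto simp: indicator_def)
    then have "\<exists>x\<in>cube a l. False"
      using l by (intro AE_in_set_imp_ex) (auto simp del: emeasure_completion simp: emeasure_cube)
    then show False by simp
  qed
qed

lemma nn_integral_const_indicator_cube:
  "l \<ge> 0 \<Longrightarrow> (\<integral>\<^sup>+ x. ennreal c * indicator (cube a l) x \<partial>lebesgue) = ennreal (c * l ^ DIM('a))"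
  for a :: "'a::euclidean_space"
  by (cases "c \<ge> 0") (auto simp del: emeasure_completion simp: nn_integral_cmult_indicator emeasure_cube ennreal_mult ennreal_neg ennreal_eq_0_iff intro!: mult_nonpos_nonneg)

lemma wmeas_ge_of_AE_lower_bound:
  fixes u :: "'a::euclidean_space \<Rightarrow> real"
  assumes u: "is_weight u" and l: "l > 0"
    and ae: "AE y in lebesgue. y \<in> cube a l \<longrightarrow> c \<le> u y"
  shows "c * l ^ DIM('a) \<le> wmeas u (cube a l)"
proof -
  have "ennreal (c * l ^ DIM('a)) = (\<integral>\<^sup>+ x. ennreal c * indicator (cube a l) x \<partial>lebesgue)"
    using l by (simp add: nn_integral_const_indicator_cube)
  also have "\<dots> \<le> (\<integral>\<^sup>+ x. ennreal (u x) * indicator (cube a l) x \<partial>lebesgue)"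
    by (rule nn_integral_mono_AE) (use ae in \<open>auto elim!: eventually_mono simp: indicator_def ennreal_leI\<close>)
  also have "\<dots> = ennreal (wmeas u (cube a l))" using weight_cube_integral[OF u l] by simp
  finally show ?thesis using weight_cube_integral(2)[OF u l, of a]
    by (simp add: ennreal_le_iff)
qed

lemma wmeas_powr_le_nn_integral:
  fixes u :: "'a::euclidean_space \<Rightarrow> real"
  assumes u: "is_weight u" and l: "l > 0" and t: "t \<ge> 1"
  shows "ennreal (wmeas u (cube a l) powr t)
     \<le> ennreal ((l ^ DIM('a)) powr (t - 1)) * (\<integral>\<^sup>+ x. ennreal (u x powr t) * indicator (cube a l) x \<partial>lebesgue)"
proof -
  have "enn_powr (\<integral>\<^sup>+ x. ennreal (u x * 1) * indicator (cube a l) x \<partial>lebesgue) t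
      \<le> ennreal ((l ^ DIM('a)) powr (t - 1)) * (\<integral>\<^sup>+ x. ennreal (u x powr t * 1) * indicator (cube a l) x \<partial>lebesgue)"
    using u t l unfolding is_weight_def
    by (intro jensen_powr_nn_integral) (auto elim!: eventually_mono simp: nn_integral_const_indicator_cube[of l 1, simplified])
  then show ?thesis
    using weight_cube_integral[OF u l, of a] by (simp add: enn_powr_def)
qed

definition wint :: "('a::euclidean_space \<Rightarrow> real) \<Rightarrow> ('a \<Rightarrow> real) \<Rightarrow> 'a set \<Rightarrow> ennreal" where
  "wint w g Q = (\<integral>\<^sup>+ y. ennreal (\<bar>g y\<bar> * w y) * indicator Q y \<partial>lebesgue)"

lemma Mw_wint: "Mw w g x = (SUP Q\<in>{Q. is_cube Q \<and> x \<in> Q}. wint w g Q / ennreal (wmeas w Q))"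
  by (simp add: Mw_def wint_def)

lemma Mw_ge_average: "l > 0 \<Longrightarrow> x \<in> cube a l \<Longrightarrow> wint w g (cube a l) / ennreal (wmeas w (cube a l)) \<le> Mw w g x"
  unfolding Mw_wint by (rule SUP_upper) (auto simp: is_cube_iff)

lemma Mw_le_bound: "(\<And>a l. l > 0 \<Longrightarrow> x \<in> cube a l \<Longrightarrow> wint w g (cube a l) / ennreal (wmeas w (cube a l)) \<le> B)
   \<Longrightarrow> Mw w g x \<le> B"
  unfolding Mw_wint by (rule SUP_least) (auto simp: is_cube_iff)

lemma wint_mono: "Q \<subseteq> Q' \<Longrightarrow> wint w g Q \<le> wint w g Q'"
  unfolding wint_def by (intro nn_integral_mono) (auto simp: indicator_def)

locale weighted =
  fixes w :: "'a::euclidean_space \<Rightarrow> real"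
  assumes weight: "is_weight w"
begin

lemma w_pos_AE: "AE x in lebesgue. 0 < w x" using weight by (simp add: is_weight_def)
lemma w_measurable[measurable]: "w \<in> borel_measurable lebesgue" using weight by (simp add: is_weight_def)

lemma wmeas_enlarged_cubes_tendsto:
  assumes l: "l > 0"
  shows "(\<lambda>k. wmeas w (cube (a - (1 / Suc k) *\<^sub>R One) (l + 2 * (1 / Suc k)))) \<longlonglongrightarrow> wmeas w (cube a l)"
proof -
  define e :: "nat \<Rightarrow> real" where "e k = 1 / Suc k" for k
  define A where "A k = cube (a - e k *\<^sub>R One) (l + 2 * e k)" for k
  have lk: "l + 2 * e k > 0" for k using l by (simp add: e_def add_pos_nonneg)
  have dec: "decseq A"
  proof (rule decseq_SucI)
    fix k
    have le: "e (Suc k) \<le> e k" by (simp add: e_def frac_le)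
    have "A (Suc k) = cube ((a - e k *\<^sub>R One) + (e k - e (Suc k)) *\<^sub>R One) ((l + 2 * e k) - 2 * (e k - e (Suc k)))"
      unfolding A_def by (simp add: algebra_simps)
    also have "\<dots> \<subseteq> A k"
      using cube_subset_enlarged[of "e k - e (Suc k)" "(a - e k *\<^sub>R One) + (e k - e (Suc k)) *\<^sub>R One"
          "(l + 2 * e k) - 2 * (e k - e (Suc k))"] le
      unfolding A_def by simp
    finally show "A (Suc k) \<subseteq> A k" .
  qed
  define M where "M = density lebesgue (\<lambda>x. ennreal (w x))"
  have emA: "emeasure M (A k) = ennreal (wmeas w (A k))" for k
    unfolding M_def A_def by (subst emeasure_density) (auto simp: weight_cube_integral(1)[OF weight lk])
  have emQ: "emeasure M (cube a l) = ennreal (wmeas w (cube a l))"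
    unfolding M_def by (subst emeasure_density) (auto simp: weight_cube_integral(1)[OF weight l])
  have "(\<lambda>k. emeasure M (A k)) \<longlonglongrightarrow> emeasure M (\<Inter>k. A k)"
  proof (rule Lim_emeasure_decseq)
    show "range A \<subseteq> sets M" by (auto simp: M_def A_def)
    show "emeasure M (A k) \<noteq> \<infinity>" for k using emA[of k] by simp
  qed (rule dec)
  moreover have "(\<Inter>k. A k) = cube a l" unfolding A_def e_def by (rule Inter_enlarged_cubes)
  ultimately have "(\<lambda>k. ennreal (wmeas w (A k))) \<longlonglongrightarrow> ennreal (wmeas w (cube a l))"
    using emA emQ by simp
  then show ?thesis
    using weight_cube_integral(2)[OF weight lk] weight_cube_integral(2)[OF weight l]
    unfolding A_def e_def
    by (intro tendsto_ennrealD) (auto intro!: always_eventually less_imp_le)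
qed

lemma average_open_enlargement:
  assumes l: "l > 0" and x: "x \<in> cube a l" and c: "c < wint w g (cube a l) / ennreal (wmeas w (cube a l))"
  shows "\<exists>a' l'. l' > 0 \<and> x \<in> box a' (a' + l' *\<^sub>R One) \<and> c < wint w g (cube a' l') / ennreal (wmeas w (cube a' l'))"
proof -
  define A where "A k = cube (a - (1 / Suc k) *\<^sub>R One) (l + 2 * (1 / Suc k))" for k
  define I where "I = wint w g (cube a l)"
  have lk: "l + 2 * (1 / Suc k) > 0" for k using l by (simp add: add_pos_nonneg)
  have Wp: "wmeas w (A k) > 0" for k unfolding A_def using weight_cube_integral(2)[OF weight lk] .
  have W0: "wmeas w (cube a l) > 0" using weight_cube_integral(2)[OF weight l] .
  have div: "I / ennreal W = I * ennreal (1 / W)" if "W > 0" for W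
    using that by (simp add: divide_ennreal_def inverse_ennreal inverse_eq_divide)
  have "(\<lambda>k. ennreal (1 / wmeas w (A k))) \<longlonglongrightarrow> ennreal (1 / wmeas w (cube a l))"
    using wmeas_enlarged_cubes_tendsto[OF l, of a] W0 unfolding A_def
    by (intro tendsto_ennrealI tendsto_divide tendsto_const) auto
  then have "(\<lambda>k. I * ennreal (1 / wmeas w (A k))) \<longlonglongrightarrow> I * ennreal (1 / wmeas w (cube a l))"
    using W0 by (intro tendsto_mult_ennreal tendsto_const) auto
  then have "(\<lambda>k. I / ennreal (wmeas w (A k))) \<longlonglongrightarrow> I / ennreal (wmeas w (cube a l))"
    using Wp W0 div by simp
  then have "eventually (\<lambda>k. c < I / ennreal (wmeas w (A k))) sequentially"
    using c unfolding order_tendsto_iff I_def by blast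
  then obtain k where k: "c < I / ennreal (wmeas w (A k))"
    by (auto simp: eventually_sequentially)
  also have "\<dots> \<le> wint w g (A k) / ennreal (wmeas w (A k))"
    unfolding I_def A_def by (intro divide_right_mono_ennreal wint_mono cube_subset_enlarged) simp
  finally show ?thesis
    using cube_in_box_enlarged[OF x, of "1 / Suc k"] lk[of k] unfolding A_def by auto
qed

lemma Mw_level_set_eq:
  "{x. c < Mw w g x} = \<Union>{box a (a + l *\<^sub>R One) | a l. l > 0 \<and> c < wint w g (cube a l) / ennreal (wmeas w (cube a l))}"
proof (intro equalityI subsetI)
  fix x assume "x \<in> {x. c < Mw w g x}"
  then obtain Q where Q: "is_cube Q" "x \<in> Q" "c < wint w g Q / ennreal (wmeas w Q)"
    unfolding Mw_wint less_SUP_iff by auto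
  then obtain a l where al: "l > 0" "Q = cube a l" by (auto simp: is_cube_iff)
  from average_open_enlargement[OF al(1) Q(2)[unfolded al(2)] Q(3)[unfolded al(2)]]
  show "x \<in> \<Union>{box a (a + l *\<^sub>R One) | a l. l > 0 \<and> c < wint w g (cube a l) / ennreal (wmeas w (cube a l))}"
    by blast
next
  fix x assume "x \<in> \<Union>{box a (a + l *\<^sub>R One) | a l. l > 0 \<and> c < wint w g (cube a l) / ennreal (wmeas w (cube a l))}"
  then obtain a l where al: "l > 0" "c < wint w g (cube a l) / ennreal (wmeas w (cube a l))" "x \<in> cube a l"
    using box_subset_cube by blast
  then show "x \<in> {x. c < Mw w g x}"
    using Mw_ge_average[OF al(1) al(3), of w g] by (auto intro: order.strict_trans2)
qed

lemma Mw_level_set_open: "open {x. c < Mw w g x}"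
  unfolding Mw_level_set_eq by (intro open_Union) (auto simp: open_box)

lemma Mw_level_set_sets[measurable]: "{x. c < Mw w g x} \<in> sets lebesgue"
  using Mw_level_set_open by simp

lemma Mw_measurable[measurable]: "Mw w g \<in> borel_measurable lebesgue"
  by (rule borel_measurableI_greater) simp

lemma Mw_le_truncated:
  assumes \<tau>: "\<tau> \<ge> 0" and g[measurable]: "g \<in> borel_measurable lebesgue"
  shows "Mw w g x \<le> Mw w (\<lambda>y. if \<tau> < \<bar>g y\<bar> then g y else 0) x + ennreal \<tau>"
proof (rule Mw_le_bound)
  fix a l assume l: "l > 0" and x: "x \<in> cube a l"
  define gt where "gt = (\<lambda>y. if \<tau> < \<bar>g y\<bar> then g y else 0)"
  define W where "W = wmeas w (cube a l)"
  have Wp: "W > 0" using weight_cube_integral(2)[OF weight l] by (simp add: W_def)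
  have "wint w g (cube a l) \<le> (\<integral>\<^sup>+ y. ennreal (\<bar>gt y\<bar> * w y) * indicator (cube a l) y
        + ennreal \<tau> * (ennreal (w y) * indicator (cube a l) y) \<partial>lebesgue)"
    unfolding wint_def
  proof (rule nn_integral_mono)
    fix y
    show "ennreal (\<bar>g y\<bar> * w y) * indicator (cube a l) y
      \<le> ennreal (\<bar>gt y\<bar> * w y) * indicator (cube a l) y + ennreal \<tau> * (ennreal (w y) * indicator (cube a l) y)"
    proof (cases "w y \<ge> 0 \<and> y \<in> cube a l")
      case True
      have "\<bar>g y\<bar> * w y \<le> \<bar>gt y\<bar> * w y + \<tau> * w y"
        using True \<tau> by (cases "\<tau> < \<bar>g y\<bar>") (auto simp: gt_def mult_right_mono)
      then show ?thesis using True \<tau>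
        by (simp add: ennreal_plus[symmetric] ennreal_mult[symmetric] ennreal_leI del: ennreal_plus)
    next
      case False
      then show ?thesis by (auto simp: indicator_def ennreal_neg mult_nonneg_nonpos)
    qed
  qed
  also have "\<dots> = wint w gt (cube a l) + ennreal \<tau> * ennreal W"
    unfolding wint_def W_def using \<tau>
    by (subst nn_integral_add) (auto simp: nn_integral_cmult weight_cube_integral(1)[OF weight l] gt_def)
  finally have "wint w g (cube a l) / ennreal W \<le> (wint w gt (cube a l) + ennreal \<tau> * ennreal W) / ennreal W"
    by (rule divide_right_mono_ennreal)
  also have "\<dots> = wint w gt (cube a l) / ennreal W + ennreal \<tau>"
    using Wp \<tau> by (simp add: add_divide_distrib_ennreal ennreal_mult[symmetric] divide_ennreal)
  also have "\<dots> \<le> Mw w gt x + ennreal \<tau>"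
    using Mw_ge_average[OF l x, of w gt] by (simp add: W_def add_right_mono)
  finally show "wint w g (cube a l) / ennreal (wmeas w (cube a l)) \<le> Mw w gt x + ennreal \<tau>"
    by (simp add: W_def)
qed

lemma Mw_level_truncated:
  assumes t: "t > 0" and g: "g \<in> borel_measurable lebesgue" and lt: "ennreal t < Mw w g x"
  shows "ennreal (t / 2) < Mw w (\<lambda>y. if t / 2 < \<bar>g y\<bar> then g y else 0) x"
proof (rule ccontr)
  assume "\<not> ?thesis"
  then have "Mw w (\<lambda>y. if t / 2 < \<bar>g y\<bar> then g y else 0) x \<le> ennreal (t / 2)" by simp
  then have "Mw w g x \<le> ennreal (t / 2) + ennreal (t / 2)"
    using Mw_le_truncated[of "t / 2" g x] t g by (meson add_right_mono order.trans less_imp_le half_gt_zero)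
  also have "\<dots> = ennreal t" using t by (simp add: ennreal_plus[symmetric] del: ennreal_plus)
  finally show False using lt by simp
qed

end
locale A1_power = weighted w for w :: "'a::euclidean_space \<Rightarrow> real" +
  fixes s C1 :: real
  assumes s1: "s > 1"
    and vweight: "is_weight (\<lambda>x. w x powr s)"
    and A1v: "\<And>Q. is_cube Q \<Longrightarrow> AE x in lebesgue. x \<in> Q \<longrightarrow>
        wmeas (\<lambda>x. w x powr s) Q / measure lebesgue Q \<le> C1 * w x powr s"
begin

abbreviation "v \<equiv> (\<lambda>x. w x powr s)"

lemma v_measurable[measurable]: "(\<lambda>x. w x powr s) \<in> borel_measurable lebesgue"
  using vweight by (simp add: is_weight_def)

lemma v_eq_w_mult: "0 < w y \<Longrightarrow> w y powr s = w y * w y powr (s - 1)"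
  by (simp add: powr_diff field_simps powr_add[symmetric])

lemma A1v_cube: "l > 0 \<Longrightarrow> AE x in lebesgue. x \<in> cube a l \<longrightarrow>
        wmeas v (cube a l) / l ^ DIM('a) \<le> C1 * w x powr s"
  using A1v[of "cube a l"] by (auto simp: is_cube_iff measure_cube)

lemma C1pos: "C1 > 0"
proof -
  define a :: 'a where "a = 0"
  have ae: "AE x in lebesgue. x \<in> cube a 1 \<longrightarrow> wmeas v (cube a 1) / 1 ^ DIM('a) \<le> C1 * w x powr s \<and> 0 < w x"
    using A1v_cube[of 1 a, simplified] w_pos_AE by eventually_elim auto
  have "\<exists>x\<in>cube a 1. wmeas v (cube a 1) / 1 ^ DIM('a) \<le> C1 * w x powr s \<and> 0 < w x"
    by (rule AE_in_set_imp_ex[OF ae cube_sets]) (simp del: emeasure_completion add: emeasure_cube)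
  then obtain x where x: "wmeas v (cube a 1) / 1 ^ DIM('a) \<le> C1 * w x powr s" "0 < w x" by auto
  have "0 < wmeas v (cube a 1)" using weight_cube_integral(2)[OF vweight, of 1 a] by simp
  with x have "0 < C1 * w x powr s" by simp
  then show ?thesis using x(2) by (simp add: zero_less_mult_iff)
qed

lemma w_ge_A1_level:
  assumes l: "l > 0"
  shows "AE y in lebesgue. y \<in> cube a l \<longrightarrow>
     (wmeas v (cube a l) / (C1 * l ^ DIM('a))) powr (1 / s) \<le> w y"
  using A1v_cube[OF l, of a] w_pos_AE
proof eventually_elim
  case (elim y)
  show ?case
  proof
    assume y: "y \<in> cube a l"
    have V0: "0 \<le> wmeas v (cube a l)" using weight_cube_integral(2)[OF vweight l, of a] by simp
    have "wmeas v (cube a l) / (C1 * l ^ DIM('a)) \<le> w y powr s"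
      using elim y C1pos l by (simp add: divide_le_eq field_simps)
    then have "(wmeas v (cube a l) / (C1 * l ^ DIM('a))) powr (1 / s) \<le> (w y powr s) powr (1 / s)"
      using V0 C1pos l s1 by (intro powr_mono2) auto
    also have "\<dots> = w y" using elim s1 by (simp add: powr_powr)
    finally show "(wmeas v (cube a l) / (C1 * l ^ DIM('a))) powr (1 / s) \<le> w y" .
  qed
qed

lemma wmeas_w_lower:
  assumes l: "l > 0"
  shows "(wmeas v (cube a l) / (C1 * l ^ DIM('a))) powr (1 / s) * l ^ DIM('a) \<le> wmeas w (cube a l)"
  by (rule wmeas_ge_of_AE_lower_bound[OF weight l w_ge_A1_level[OF l]])

lemma wmeas_w_powr_le:
  assumes l: "l > 0"
  shows "wmeas w (cube a l) powr s \<le> (l ^ DIM('a)) powr (s - 1) * wmeas v (cube a l)"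
proof -
  have "ennreal (wmeas w (cube a l) powr s)
      \<le> ennreal ((l ^ DIM('a)) powr (s - 1)) * ennreal (wmeas v (cube a l))"
    using wmeas_powr_le_nn_integral[OF weight l, of s a] s1 weight_cube_integral(1)[OF vweight l] by simp
  then show ?thesis
    using weight_cube_integral(2)[OF vweight l, of a] by (simp add: ennreal_mult[symmetric] ennreal_le_iff)
qed
lemma v_w_ratio_le:
  assumes l: "l > 0"
  shows "AE y in lebesgue. y \<in> cube a l \<longrightarrow>
     wmeas v (cube a l) / wmeas w (cube a l) \<le> C1 * w y powr (s - 1)"
  using w_ge_A1_level[OF l, of a] w_pos_AE
proof eventually_elim
  case (elim y)
  show ?case
  proof
    assume y: "y \<in> cube a l"
    define V where "V = wmeas v (cube a l)"
    define W where "W = wmeas w (cube a l)"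
    define L where "L = l ^ DIM('a)"
    define m where "m = V / (C1 * L)"
    define t where "t = m powr (1 / s)"
    have Lp: "L > 0" using l by (simp add: L_def)
    have Vp: "V > 0" using weight_cube_integral(2)[OF vweight l] by (simp add: V_def)
    have mp: "m > 0" using Vp Lp C1pos by (simp add: m_def)
    have tp: "t > 0" using mp by (simp add: t_def)
    have ty: "t \<le> w y" using elim y by (simp add: t_def m_def V_def L_def)
    have tW: "t * L \<le> W" using wmeas_w_lower[OF l, of a] by (simp add: t_def m_def V_def L_def W_def)
    have ts: "t powr s = m" using mp s1 by (simp add: t_def powr_powr)
    have "V / W \<le> V / (t * L)"
      using tW Vp tp Lp by (intro divide_left_mono) (auto intro: mult_pos_pos order.strict_trans2)
    also have "V / (t * L) = C1 * (m / t)" using Lp C1pos tp by (simp add: m_def field_simps)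
    also have "m / t = t powr (s - 1)" using tp ts by (simp add: powr_diff)
    also have "C1 * t powr (s - 1) \<le> C1 * w y powr (s - 1)"
      using ty tp s1 C1pos by (intro mult_left_mono powr_mono2) auto
    finally show "wmeas v (cube a l) / wmeas w (cube a l) \<le> C1 * w y powr (s - 1)"
      by (simp add: V_def W_def)
  qed
qed

(* Via Jensen, w itself satisfies the A_1 condition with constant C1^(1/s). *)
lemma w_A1_bound:
  assumes l: "l > 0"
  shows "AE y in lebesgue. y \<in> cube a l \<longrightarrow>
     wmeas w (cube a l) / l ^ DIM('a) \<le> C1 powr (1 / s) * w y"
  using A1v_cube[OF l, of a] w_pos_AE
proof eventually_elim
  case (elim y)
  show ?case
  proof
    assume y: "y \<in> cube a l"
    define V where "V = wmeas v (cube a l)"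
    define W where "W = wmeas w (cube a l)"
    define L where "L = l ^ DIM('a)"
    have Lp: "L > 0" using l by (simp add: L_def)
    have Wp: "W > 0" using weight_cube_integral(2)[OF weight l] by (simp add: W_def)
    have J: "W powr s \<le> L powr (s - 1) * V" using wmeas_w_powr_le[OF l, of a] by (simp add: W_def V_def L_def)
    have "(W / L) powr s = W powr s / L powr s" using Wp Lp by (simp add: powr_divide)
    also have "\<dots> \<le> L powr (s - 1) * V / L powr s" using J Lp by (intro divide_right_mono) auto
    also have "\<dots> = V / L" using Lp by (simp add: powr_diff field_simps)
    also have "\<dots> \<le> C1 * w y powr s" using elim y by (simp add: V_def L_def)
    finally have "(W / L) powr s \<le> C1 * w y powr s" .
    then have "((W / L) powr s) powr (1 / s) \<le> (C1 * w y powr s) powr (1 / s)"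
      using Wp Lp s1 by (intro powr_mono2) auto
    also have "(C1 * w y powr s) powr (1 / s) = C1 powr (1 / s) * w y"
      using C1pos elim s1 by (simp add: powr_mult powr_powr)
    also have "((W / L) powr s) powr (1 / s) = W / L"
      using Wp Lp s1 by (simp add: powr_powr)
    finally show "wmeas w (cube a l) / l ^ DIM('a) \<le> C1 powr (1 / s) * w y"
      by (simp add: W_def L_def)
  qed
qed

lemma doubling:
  assumes l: "l > 0" and m: "m > 0" and sub: "cube a l \<subseteq> cube b m"
  shows "wmeas w (cube b m) * l ^ DIM('a) \<le> C1 powr (1 / s) * m ^ DIM('a) * wmeas w (cube a l)"
proof -
  define c where "c = wmeas w (cube b m) / m ^ DIM('a) / C1 powr (1 / s)"
  have Cp: "C1 powr (1 / s) > 0" using C1pos by simp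
  have "AE y in lebesgue. y \<in> cube a l \<longrightarrow> c \<le> w y"
    using w_A1_bound[OF m, of b]
  proof eventually_elim
    case (elim y)
    show ?case
    proof
      assume "y \<in> cube a l"
      then have "wmeas w (cube b m) / m ^ DIM('a) \<le> C1 powr (1 / s) * w y" using elim sub by auto
      then have "wmeas w (cube b m) / m ^ DIM('a) / C1 powr (1 / s) \<le> w y"
        using Cp by (subst pos_divide_le_eq) (auto simp: mult.commute)
      then show "c \<le> w y" unfolding c_def .
    qed
  qed
  then have "c * l ^ DIM('a) \<le> wmeas w (cube a l)" by (rule wmeas_ge_of_AE_lower_bound[OF weight l])
  then show ?thesis using Cp m by (simp add: c_def field_simps)
qed

lemma wmeas_v_upper:
  assumes l: "l > 0"
  shows "wmeas v (cube a l) \<le> C1 * (l ^ DIM('a)) powr (1 - s) * wmeas w (cube a l) powr s"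
proof -
  define V where "V = wmeas v (cube a l)"
  define W where "W = wmeas w (cube a l)"
  define L where "L = l ^ DIM('a)"
  have Lp: "L > 0" using l by (simp add: L_def)
  have Vp: "V > 0" using weight_cube_integral(2)[OF vweight l] by (simp add: V_def)
  have Wp: "W > 0" using weight_cube_integral(2)[OF weight l] by (simp add: W_def)
  define t where "t = (V / (C1 * L)) powr (1 / s)"
  have tW: "t * L \<le> W" using wmeas_w_lower[OF l, of a] by (simp add: t_def V_def L_def W_def)
  have t0: "t \<ge> 0" by (simp add: t_def)
  have ts: "t powr s = V / (C1 * L)" using Vp Lp C1pos s1 by (simp add: t_def powr_powr)
  have "t \<le> W / L" using tW Lp by (simp add: pos_le_divide_eq)
  then have "t powr s \<le> (W / L) powr s" using t0 s1 by (intro powr_mono2) auto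
  then have "V / (C1 * L) \<le> W powr s / L powr s" using ts Wp Lp by (simp add: powr_divide)
  then have "V \<le> C1 * L * (W powr s / L powr s)" using C1pos Lp by (simp add: pos_divide_le_eq mult.commute)
  also have "C1 * L * (W powr s / L powr s) = C1 * L powr (1 - s) * W powr s"
  proof -
    have e: "L / L powr s = L powr (1 - s)"
      using Lp by (simp add: powr_diff)
    have "C1 * L * (W powr s / L powr s) = C1 * (L / L powr s) * W powr s" by (simp add: field_simps)
    then show ?thesis unfolding e .
  qed
  finally show ?thesis by (simp add: V_def W_def L_def)
qed

definition "Cd = C1 powr (1 / s) * 3 ^ DIM('a)"

lemma Cd_pos: "Cd > 0" using C1pos by (simp add: Cd_def)

lemma wmeas_triple_le:
  assumes l: "l > 0"
  shows "wmeas w (cube (a - l *\<^sub>R One) (3 * l)) \<le> Cd * wmeas w (cube a l)"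
proof -
  have "wmeas w (cube (a - l *\<^sub>R One) (3 * l)) * l ^ DIM('a)
      \<le> C1 powr (1 / s) * (3 * l) ^ DIM('a) * wmeas w (cube a l)"
    using l by (intro doubling cube_subset_triple) auto
  then have "wmeas w (cube (a - l *\<^sub>R One) (3 * l)) * l ^ DIM('a) \<le> (Cd * wmeas w (cube a l)) * l ^ DIM('a)"
    by (simp add: Cd_def power_mult_distrib algebra_simps)
  then show ?thesis using l by simp
qed

end

(* Vitali covering lemma for finitely many cubes: a disjoint subfamily whose tripled
   cubes cover the union.  Induction on the family, always keeping a largest cube. *)
lemma vitali_covering_finite:
  fixes F :: "('a::euclidean_space \<times> real) set"
  assumes "finite F" "\<forall>p\<in>F. snd p > 0"
  shows "\<exists>G \<subseteq> F. disjoint_family_on (\<lambda>p. cube (fst p) (snd p)) G \<and>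
     (\<Union>p\<in>F. cube (fst p) (snd p)) \<subseteq> (\<Union>p\<in>G. cube (fst p - snd p *\<^sub>R One) (3 * snd p))"
  using assms
proof (induction "card F" arbitrary: F rule: less_induct)
  case less
  show ?case
  proof (cases "F = {}")
    case True then show ?thesis by (intro exI[of _ "{}"]) (auto simp: disjoint_family_on_def)
  next
    case False
    define L where "L = Max (snd ` F)"
    have "L \<in> snd ` F" unfolding L_def using False less.prems by (intro Max_in) auto
    then obtain a l where al: "(a, l) \<in> F" "l = L" by force
    have maxl: "snd p \<le> l" if "p \<in> F" for p
      using that less.prems al unfolding L_def by (simp add: Max_ge)
    have lpos: "l > 0" using al less.prems by force
    define F' where "F' = {p \<in> F. cube (fst p) (snd p) \<inter> cube a l = {}}"
    have "(a, l) \<notin> F'" using cube_corner[of l a] lpos by (auto simp: F'_def)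
    then have F'sub: "F' \<subset> F" using al unfolding F'_def by blast
    then have "card F' < card F" using less.prems by (intro psubset_card_mono) auto
    then obtain G' where G': "G' \<subseteq> F'" "disjoint_family_on (\<lambda>p. cube (fst p) (snd p)) G'"
      "(\<Union>p\<in>F'. cube (fst p) (snd p)) \<subseteq> (\<Union>p\<in>G'. cube (fst p - snd p *\<^sub>R One) (3 * snd p))"
      using less.hyps[of F'] less.prems F'sub by (auto simp: F'_def)
    define G where "G = insert (a, l) G'"
    have "G \<subseteq> F" using G'(1) F'sub al by (auto simp: G_def)
    moreover have "disjoint_family_on (\<lambda>p. cube (fst p) (snd p)) G"
      using G'(1,2) unfolding G_def disjoint_family_on_def F'_def by auto
    moreover have "(\<Union>p\<in>F. cube (fst p) (snd p)) \<subseteq> (\<Union>p\<in>G. cube (fst p - snd p *\<^sub>R One) (3 * snd p))"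
    proof
      fix x assume "x \<in> (\<Union>p\<in>F. cube (fst p) (snd p))"
      then obtain p where p: "p \<in> F" "x \<in> cube (fst p) (snd p)" by auto
      show "x \<in> (\<Union>p\<in>G. cube (fst p - snd p *\<^sub>R One) (3 * snd p))"
      proof (cases "p \<in> F'")
        case True then show ?thesis using G'(3) p unfolding G_def by blast
      next
        case False
        then obtain y where y: "y \<in> cube (fst p) (snd p)" "y \<in> cube a l" using p by (auto simp: F'_def)
        have "cube (fst p) (snd p) \<subseteq> cube (a - l *\<^sub>R One) (3 * l)"
          using cube_subset_triple_of_meeting[OF y(2) y(1) maxl[OF p(1)]] .
        then show ?thesis using p unfolding G_def by force
      qed
    qed
    ultimately show ?thesis by blast
  qed
qed

lemma sum_wint_disjoint_le:
  assumes G: "finite G" "disjoint_family_on Q G" and Q: "\<And>p. p \<in> G \<Longrightarrow> Q p \<in> sets lebesgue"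
    and meas: "(\<lambda>y. ennreal (\<bar>g y\<bar> * u y)) \<in> borel_measurable lebesgue"
  shows "(\<Sum>p\<in>G. wint u g (Q p)) \<le> (\<integral>\<^sup>+ y. ennreal (\<bar>g y\<bar> * u y) \<partial>lebesgue)"
proof -
  have "(\<Sum>p\<in>G. wint u g (Q p))
      = (\<integral>\<^sup>+ y. ennreal (\<bar>g y\<bar> * u y) * (\<Sum>p\<in>G. indicator (Q p) y) \<partial>lebesgue)"
    unfolding wint_def using G Q meas
    by (subst nn_integral_sum[symmetric]) (auto simp: sum_distrib_left)
  also have "\<dots> = (\<integral>\<^sup>+ y. ennreal (\<bar>g y\<bar> * u y) * indicator (\<Union>p\<in>G. Q p) y \<partial>lebesgue)"
    by (simp add: indicator_UN_disjoint[OF G])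
  also have "\<dots> \<le> (\<integral>\<^sup>+ y. ennreal (\<bar>g y\<bar> * u y) \<partial>lebesgue)"
    by (intro nn_integral_mono) (simp add: indicator_def)
  finally show ?thesis .
qed

context A1_power begin

(* The A_1 comparison between w and v = w^s: on a cube T,
   w \<le> (C1 w(T)/v(T)) v a.e. on T, by v(T)/w(T) \<le> C1 w^(s-1). *)
lemma w_le_v_AE:
  assumes m: "m > 0"
  shows "AE y in lebesgue. y \<in> cube b m \<longrightarrow>
     w y \<le> C1 * wmeas w (cube b m) / wmeas v (cube b m) * v y"
  using v_w_ratio_le[OF m, of b] w_pos_AE
proof eventually_elim
  case (elim y)
  define W where "W = wmeas w (cube b m)"
  define V where "V = wmeas v (cube b m)"
  have Wp: "W > 0" using weight_cube_integral(2)[OF weight m] by (simp add: W_def)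
  have Vp: "V > 0" using weight_cube_integral(2)[OF vweight m] by (simp add: V_def)
  show ?case
  proof
    assume "y \<in> cube b m"
    then have "w y * (V / W) \<le> w y * (C1 * w y powr (s - 1))"
      using elim by (intro mult_left_mono) (auto simp: V_def W_def)
    also have "\<dots> = C1 * v y" using v_eq_w_mult[of y] elim by (simp add: algebra_simps)
    finally show "w y \<le> C1 * wmeas w (cube b m) / wmeas v (cube b m) * v y"
      using Wp Vp by (simp add: W_def V_def field_simps)
  qed
qed

lemma wint_w_le_wint_v:
  assumes g[measurable]: "g \<in> borel_measurable lebesgue" and Q[measurable]: "Q \<in> sets lebesgue"
    and m: "m > 0" and sub: "Q \<subseteq> cube b m"
  shows "wint w g Q \<le> ennreal (C1 * wmeas w (cube b m) / wmeas v (cube b m)) * wint v g Q"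
proof -
  define c where "c = C1 * wmeas w (cube b m) / wmeas v (cube b m)"
  have c0: "c \<ge> 0"
    using C1pos weight_cube_integral(2)[OF weight m, of b] weight_cube_integral(2)[OF vweight m, of b]
    by (simp add: c_def)
  have "wint w g Q \<le> (\<integral>\<^sup>+ y. ennreal c * (ennreal (\<bar>g y\<bar> * v y) * indicator Q y) \<partial>lebesgue)"
    unfolding wint_def
  proof (rule nn_integral_mono_AE)
    show "AE y in lebesgue. ennreal (\<bar>g y\<bar> * w y) * indicator Q y
        \<le> ennreal c * (ennreal (\<bar>g y\<bar> * v y) * indicator Q y)"
      using w_le_v_AE[OF m, of b]
    proof eventually_elim
      case (elim y)
      show ?case
      proof (cases "y \<in> Q")
        case True
        then have "\<bar>g y\<bar> * w y \<le> \<bar>g y\<bar> * (c * v y)"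
          using elim sub unfolding c_def by (intro mult_left_mono) auto
        then have "\<bar>g y\<bar> * w y \<le> c * (\<bar>g y\<bar> * v y)" by (simp add: algebra_simps)
        then show ?thesis using True c0 by (simp add: ennreal_mult[symmetric] ennreal_leI)
      qed simp
    qed
  qed
  also have "\<dots> = ennreal c * wint v g Q"
    unfolding wint_def by (rule nn_integral_cmult) auto
  finally show ?thesis unfolding c_def .
qed

definition "Cw = C1 * Cd"

lemma Cw_pos: "Cw > 0" using C1pos Cd_pos by (simp add: Cw_def)

(* If the w-average of |g| over Q exceeds c, then v(3Q) \<le> (Cw/c) \<integral>_Q |g| v:
   c w(Q) < \<integral>_Q |g| w \<le> (C1 w(3Q)/v(3Q)) \<integral>_Q |g| v and w(3Q) \<le> Cd w(Q). *)
lemma tripled_cube_v_bound: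
  assumes g[measurable]: "g \<in> borel_measurable lebesgue" and l: "l > 0" and c: "c > 0"
    and avg: "ennreal c < wint w g (cube a l) / ennreal (wmeas w (cube a l))"
  shows "ennreal (wmeas v (cube (a - l *\<^sub>R One) (3 * l))) \<le> ennreal (Cw / c) * wint v g (cube a l)"
proof -
  define T where "T = cube (a - l *\<^sub>R One) (3 * l)"
  define Q where "Q = cube a l"
  define WQ where "WQ = wmeas w Q"
  define WT where "WT = wmeas w T"
  define VT where "VT = wmeas v T"
  have l3: "3 * l > 0" using l by simp
  have WTp: "WT > 0" unfolding WT_def T_def using weight_cube_integral(2)[OF weight l3] .
  have VTp: "VT > 0" unfolding VT_def T_def using weight_cube_integral(2)[OF vweight l3] .
  have WQp: "WQ > 0" unfolding WQ_def Q_def using weight_cube_integral(2)[OF weight l] .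
  have compare: "wint w g Q \<le> ennreal (C1 * WT / VT) * wint v g Q"
    unfolding WT_def VT_def T_def Q_def using l by (intro wint_w_le_wint_v cube_subset_triple) auto
  have triple: "WT \<le> Cd * WQ"
    unfolding WT_def WQ_def T_def Q_def by (rule wmeas_triple_le[OF l])
  have "ennreal (c * WQ) \<le> wint w g Q"
    using avg WQp c unfolding Q_def[symmetric] WQ_def[symmetric]
    by (cases "wint w g Q") (auto simp: divide_ennreal ennreal_less_iff pos_less_divide_eq ennreal_leI)
  also have "\<dots> \<le> ennreal (C1 * WT / VT) * wint v g Q" by (rule compare)
  finally have cW: "ennreal (c * WQ) \<le> ennreal (C1 * WT / VT) * wint v g Q" .
  have "ennreal VT = ennreal (VT / (c * WQ)) * ennreal (c * WQ)"
    using c WQp VTp by (simp add: ennreal_mult[symmetric])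
  also have "\<dots> \<le> ennreal (VT / (c * WQ)) * (ennreal (C1 * WT / VT) * wint v g Q)"
    using cW by (intro mult_left_mono) auto
  also have "\<dots> = ennreal (C1 * WT / (c * WQ)) * wint v g Q"
    using c WQp VTp WTp C1pos by (simp add: mult.assoc[symmetric] ennreal_mult[symmetric])
  also have "\<dots> \<le> ennreal (Cw / c) * wint v g Q"
    using triple c WQp C1pos
    by (intro mult_right_mono ennreal_leI) (auto simp: Cw_def divide_le_eq field_simps)
  finally show ?thesis unfolding VT_def T_def Q_def .
qed

(* Weak type for finitely many cubes with large w-average: Vitali selection plus
   the tripled-cube bound. *)
lemma cube_union_weak_bound:
  assumes g[measurable]: "g \<in> borel_measurable lebesgue" and c: "c > 0" and F: "finite F"
    and P: "\<And>p. p \<in> F \<Longrightarrow> snd p > 0 \<and>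
      ennreal c < wint w g (cube (fst p) (snd p)) / ennreal (wmeas w (cube (fst p) (snd p)))"
  shows "emeasure (density lebesgue (\<lambda>x. ennreal (v x))) (\<Union>p\<in>F. cube (fst p) (snd p))
     \<le> ennreal (Cw / c) * (\<integral>\<^sup>+ y. ennreal (\<bar>g y\<bar> * v y) \<partial>lebesgue)"
proof -
  define M where "M = density lebesgue (\<lambda>x. ennreal (v x))"
  define T where "T p = cube (fst p - snd p *\<^sub>R One) (3 * snd p)" for p :: "'a \<times> real"
  obtain G where G: "G \<subseteq> F" "disjoint_family_on (\<lambda>p. cube (fst p) (snd p)) G"
      "(\<Union>p\<in>F. cube (fst p) (snd p)) \<subseteq> (\<Union>p\<in>G. T p)"
    using vitali_covering_finite[of F] F P unfolding T_def by auto
  have finG: "finite G" using G(1) F by (rule finite_subset)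
  have emT: "emeasure M (T p) = ennreal (wmeas v (T p))" if "p \<in> G" for p
    using P[of p] G(1) that unfolding M_def T_def
    by (subst emeasure_density) (auto simp: weight_cube_integral(1)[OF vweight])
  have "emeasure M (\<Union>p\<in>F. cube (fst p) (snd p)) \<le> emeasure M (\<Union>p\<in>G. T p)"
    using G(3) finG by (intro emeasure_mono) (auto simp: M_def T_def)
  also have "\<dots> \<le> (\<Sum>p\<in>G. emeasure M (T p))"
    using finG by (intro emeasure_subadditive_finite) (auto simp: M_def T_def)
  also have "\<dots> \<le> (\<Sum>p\<in>G. ennreal (Cw / c) * wint v g (cube (fst p) (snd p)))"
    using G(1) P emT unfolding T_def by (intro sum_mono) (auto intro!: tripled_cube_v_bound[OF g _ c])
  also have "\<dots> = ennreal (Cw / c) * (\<Sum>p\<in>G. wint v g (cube (fst p) (snd p)))"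
    by (simp add: sum_distrib_left)
  also have "\<dots> \<le> ennreal (Cw / c) * (\<integral>\<^sup>+ y. ennreal (\<bar>g y\<bar> * v y) \<partial>lebesgue)"
    using finG G(2) by (intro mult_left_mono sum_wint_disjoint_le) auto
  finally show ?thesis unfolding M_def .
qed

(* The level set is a union of open
   boxes inside cubes with large average; by Lindeloef countably many suffice, and
   the measure of their union is the supremum over finite subunions. *)
lemma Mw_weak_type:
  assumes g[measurable]: "g \<in> borel_measurable lebesgue" and c: "c > 0"
  shows "emeasure (density lebesgue (\<lambda>x. ennreal (v x))) {x. ennreal c < Mw w g x}
     \<le> ennreal (Cw / c) * (\<integral>\<^sup>+ y. ennreal (\<bar>g y\<bar> * v y) \<partial>lebesgue)"
proof -
  define M where "M = density lebesgue (\<lambda>x. ennreal (v x))"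
  define P where "P = {p. snd p > 0 \<and> ennreal c < wint w g (cube (fst p) (snd p)) / ennreal (wmeas w (cube (fst p) (snd p)))}"
  define bx where "bx p = box (fst p) (fst p + snd p *\<^sub>R One)" for p :: "'a \<times> real"
  have U: "{x. ennreal c < Mw w g x} = \<Union>(bx ` P)"
    unfolding Mw_level_set_eq P_def bx_def by (auto simp: image_iff) blast
  obtain FF where FF: "FF \<subseteq> bx ` P" "countable FF" "\<Union>FF = \<Union>(bx ` P)"
    using Lindelof_openin[of "bx ` P" UNIV] by (auto simp: bx_def open_box)
  then obtain P' where P': "P' \<subseteq> P" "countable P'" "\<Union>(bx ` P') = \<Union>(bx ` P)"
    by (metis countable_subset_image)
  show ?thesis
  proof (cases "P' = {}")
    case True
    then show ?thesis using P'(3) unfolding U by simp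
  next
    case False
    define e where "e = from_nat_into P'"
    have rng: "range e = P'" using False P'(2) by (simp add: e_def)
    define UU where "UU m = (\<Union>k\<in>{..<m}. bx (e k))" for m
    have "(\<Union>m. UU m) = \<Union>(bx ` P')" unfolding UU_def rng[symmetric] by auto
    then have "emeasure M {x. ennreal c < Mw w g x} = (SUP m. emeasure M (UU m))"
      unfolding U P'(3)[symmetric]
      by (subst SUP_emeasure_incseq) (auto simp: M_def UU_def bx_def incseq_def intro: order.strict_trans2)
    also have "\<dots> \<le> ennreal (Cw / c) * (\<integral>\<^sup>+ y. ennreal (\<bar>g y\<bar> * v y) \<partial>lebesgue)"
    proof (rule SUP_least)
      fix m
      have "emeasure M (UU m) \<le> emeasure M (\<Union>p\<in>e ` {..<m}. cube (fst p) (snd p))"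
        unfolding UU_def bx_def using box_subset_cube
        by (intro emeasure_mono) (auto simp: M_def)
      also have "\<dots> \<le> ennreal (Cw / c) * (\<integral>\<^sup>+ y. ennreal (\<bar>g y\<bar> * v y) \<partial>lebesgue)"
        unfolding M_def using rng P'(1) by (intro cube_union_weak_bound[OF g c]) (auto simp: P_def)
      finally show "emeasure M (UU m) \<le> \<dots>" .
    qed
    finally show ?thesis unfolding M_def .
  qed
qed

end

lemma nn_integral_powr_interval:
  fixes b e :: real
  assumes b: "b \<ge> 0" and e: "e > -1"
  shows "(\<integral>\<^sup>+ t. ennreal (t powr e) * indicator {0<..<b} t \<partial>lborel) = ennreal (b powr (e + 1) / (e + 1))"
proof -
  define f where "f t = (if t \<in> {0..b} then t powr e else 0)" for t :: real
  have hi: "(f has_integral (b powr (e + 1) / (e + 1))) UNIV"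
    unfolding f_def has_integral_restrict_UNIV using has_integral_powr_from_0[OF e b] .
  have fm: "f \<in> borel_measurable borel" unfolding f_def by measurable
  have fn: "0 \<le> f t" for t by (simp add: f_def)
  have I: "integral\<^sup>N lborel f = ennreal (b powr (e + 1) / (e + 1))"
    by (rule nn_integral_has_integral_lborel[OF fm fn hi])
  have "(\<integral>\<^sup>+ t. ennreal (t powr e) * indicator {0<..<b} t \<partial>lborel) = integral\<^sup>N lborel f"
  proof (rule nn_integral_cong_AE)
    show "AE x in lborel. ennreal (x powr e) * indicator {0<..<b} x = ennreal (f x)"
      using AE_lborel_singleton[of b] AE_lborel_singleton[of 0]
      by eventually_elim (auto simp: f_def indicator_def)
  qed
  then show ?thesis using I by simp
qed

lemma enn_powr_le_layer_cake:
  fixes z :: ennreal and q :: real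
  assumes q: "q > 0"
  shows "enn_powr z q \<le> (\<integral>\<^sup>+ t. ennreal (q * t powr (q - 1)) * indicator {t. 0 < t \<and> ennreal t < z} t \<partial>lborel)"
proof -
  have part: "(\<integral>\<^sup>+ t. ennreal (q * t powr (q - 1)) * indicator {0<..<a} t \<partial>lborel) = ennreal (a powr q)"
    if a: "a \<ge> 0" for a
  proof -
    have "(\<integral>\<^sup>+ t. ennreal (q * t powr (q - 1)) * indicator {0<..<a} t \<partial>lborel)
       = (\<integral>\<^sup>+ t. ennreal q * (ennreal (t powr (q - 1)) * indicator {0<..<a} t) \<partial>lborel)"
      using q by (intro nn_integral_cong) (simp add: ennreal_mult mult.assoc)
    also have "\<dots> = ennreal q * (\<integral>\<^sup>+ t. ennreal (t powr (q - 1)) * indicator {0<..<a} t \<partial>lborel)"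
      by (rule nn_integral_cmult) measurable
    also have "\<dots> = ennreal q * ennreal (a powr (q - 1 + 1) / (q - 1 + 1))"
      using a q by (subst nn_integral_powr_interval) auto
    also have "\<dots> = ennreal (a powr q)" using q a by (simp add: ennreal_mult[symmetric])
    finally show ?thesis .
  qed
  have setq: "{t. 0 < t \<and> ennreal t < ennreal a} = {0<..<a}" if "a \<ge> 0" for a
    using that by (auto simp: ennreal_less_iff)
  show ?thesis
  proof (cases z)
    case (real a)
    then show ?thesis using part[of a] setq[of a] by (simp add: enn_powr_def)
  next
    case top
    have big: "ennreal (real n) \<le> (\<integral>\<^sup>+ t. ennreal (q * t powr (q - 1)) * indicator {t. 0 < t \<and> ennreal t < z} t \<partial>lborel)" for n :: nat
    proof -
      define a where "a = real n powr (1 / q)"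
      have a0: "a \<ge> 0" by (simp add: a_def)
      have "a powr q = real n" using q by (cases "n = 0") (auto simp: a_def powr_powr)
      then have "ennreal (real n) = (\<integral>\<^sup>+ t. ennreal (q * t powr (q - 1)) * indicator {0<..<a} t \<partial>lborel)"
        using part[OF a0] by simp
      also have "\<dots> \<le> (\<integral>\<^sup>+ t. ennreal (q * t powr (q - 1)) * indicator {t. 0 < t \<and> ennreal t < z} t \<partial>lborel)"
        using top by (intro nn_integral_mono) (auto simp: indicator_def)
      finally show ?thesis .
    qed
    have "top = (SUP n. of_nat n :: ennreal)" by (simp add: ennreal_SUP_of_nat_eq_top)
    also have "\<dots> \<le> (\<integral>\<^sup>+ t. ennreal (q * t powr (q - 1)) * indicator {t. 0 < t \<and> ennreal t < z} t \<partial>lborel)"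
      using big by (intro SUP_least) (simp add: ennreal_of_nat_eq_real_of_nat)
    finally show ?thesis using top by (simp add: top_unique)
  qed
qed

lemma pair_sigma_finite_lebesgue_lborel:
  "pair_sigma_finite (lebesgue :: 'a::euclidean_space measure) (lborel :: real measure)"
  unfolding pair_sigma_finite_def using sigma_finite_lebesgue sigma_finite_lborel by auto

lemma nn_integral_layer_kernel:
  fixes G V K q :: real
  assumes G: "G \<ge> 0" and V: "V \<ge> 0" and K: "K \<ge> 0" and q: "q > 1"
  shows "(\<integral>\<^sup>+ t. ennreal (q * t powr (q - 1)) * ennreal (2 * K / t)
            * (ennreal (G * V) * indicator {t. 0 < t \<and> t < 2 * G} t) \<partial>lborel)
       = ennreal (2 powr q * K * q / (q - 1)) * ennreal (G powr q * V)"
proof -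
  define c where "c = 2 * K * q * (G * V)"
  have c0: "c \<ge> 0" using G V K q by (simp add: c_def)
  have "(\<integral>\<^sup>+ t. ennreal (q * t powr (q - 1)) * ennreal (2 * K / t)
            * (ennreal (G * V) * indicator {t. 0 < t \<and> t < 2 * G} t) \<partial>lborel)
      = (\<integral>\<^sup>+ t. ennreal c * (ennreal (t powr (q - 2)) * indicator {0<..<2 * G} t) \<partial>lborel)"
  proof (rule nn_integral_cong)
    fix t :: real
    show "ennreal (q * t powr (q - 1)) * ennreal (2 * K / t) * (ennreal (G * V) * indicator {t. 0 < t \<and> t < 2 * G} t)
      = ennreal c * (ennreal (t powr (q - 2)) * indicator {0<..<2 * G} t)"
    proof (cases "0 < t \<and> t < 2 * G")
      case True
      then have t: "t > 0" by simp
      have "t powr (q - 1) = t powr (q - 2) * t" using powr_add[of t "q - 2" 1] t by simp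
      then have "q * t powr (q - 1) * (2 * K / t) * (G * V) = c * t powr (q - 2)"
        using t by (simp add: c_def field_simps)
      then show ?thesis using True t q K G V c0
        by (simp add: indicator_def ennreal_mult[symmetric] mult.assoc)
    qed (auto simp: indicator_def)
  qed
  also have "\<dots> = ennreal c * ennreal ((2 * G) powr (q - 2 + 1) / (q - 2 + 1))"
    using G q by (subst nn_integral_cmult) (auto simp: nn_integral_powr_interval)
  also have "c * ((2 * G) powr (q - 2 + 1) / (q - 2 + 1)) = 2 powr q * K * q / (q - 1) * (G powr q * V)"
  proof (cases "G = 0")
    case False
    then have "G > 0" using G by simp
    then have "2 * G * (2 * G) powr (q - 1) = 2 powr q * G powr q"
      using powr_add[of "2 * G" 1 "q - 1"] by (simp add: powr_mult)
    then show ?thesis unfolding c_def by (simp add: field_simps)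
  qed (use q in simp)
  then have "ennreal c * ennreal ((2 * G) powr (q - 2 + 1) / (q - 2 + 1))
      = ennreal (2 powr q * K * q / (q - 1)) * ennreal (G powr q * V)"
    using c0 G V K q by (simp add: ennreal_mult[symmetric])
  finally show ?thesis .
qed

context A1_power begin

(* Level sets of M_w g: by truncation at t/2 and the weak-type inequality,
   v({M_w g > t}) \<le> (2 Cw/t) \<integral>_{|g| > t/2} |g| v. *)
lemma Mw_level_set_v_bound:
  assumes g[measurable]: "g \<in> borel_measurable lebesgue" and t: "t > 0"
  shows "emeasure (density lebesgue (\<lambda>x. ennreal (v x))) {x. ennreal t < Mw w g x}
     \<le> ennreal (2 * Cw / t) * (\<integral>\<^sup>+ x. ennreal (\<bar>g x\<bar> * v x) * indicator {t. 0 < t \<and> t < 2 * \<bar>g x\<bar>} t \<partial>lebesgue)"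
proof -
  define M where "M = density lebesgue (\<lambda>x. ennreal (v x))"
  define gt where "gt y = (if t / 2 < \<bar>g y\<bar> then g y else 0)" for y
  have gt_meas[measurable]: "gt \<in> borel_measurable lebesgue" unfolding gt_def by measurable
  have "emeasure M {x. ennreal t < Mw w g x} \<le> emeasure M {x. ennreal (t / 2) < Mw w gt x}"
    using Mw_level_truncated[OF t g] unfolding M_def gt_def by (intro emeasure_mono) auto
  also have "\<dots> \<le> ennreal (Cw / (t / 2)) * (\<integral>\<^sup>+ y. ennreal (\<bar>gt y\<bar> * v y) \<partial>lebesgue)"
    unfolding M_def using t by (intro Mw_weak_type) auto
  also have "(\<integral>\<^sup>+ y. ennreal (\<bar>gt y\<bar> * v y) \<partial>lebesgue)
      = (\<integral>\<^sup>+ x. ennreal (\<bar>g x\<bar> * v x) * indicator {t. 0 < t \<and> t < 2 * \<bar>g x\<bar>} t \<partial>lebesgue)"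
    using t by (intro nn_integral_cong) (auto simp: gt_def indicator_def)
  finally show ?thesis unfolding M_def by (simp add: ac_simps)
qed

lemma Mw_level_slice:
  assumes g[measurable]: "g \<in> borel_measurable lebesgue"
  shows "(\<integral>\<^sup>+ x. c * indicator {t. 0 < t \<and> ennreal t < Mw w g x} t * ennreal (v x) \<partial>lebesgue)
     \<le> (\<integral>\<^sup>+ x. c * ennreal (2 * Cw / t) * (ennreal (\<bar>g x\<bar> * v x) * indicator {t. 0 < t \<and> t < 2 * \<bar>g x\<bar>} t) \<partial>lebesgue)"
proof (cases "t > 0")
  case True
  have "(\<integral>\<^sup>+ x. c * indicator {t. 0 < t \<and> ennreal t < Mw w g x} t * ennreal (v x) \<partial>lebesgue)
     = c * (\<integral>\<^sup>+ x. ennreal (v x) * indicator {x. ennreal t < Mw w g x} x \<partial>lebesgue)"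
    using True by (subst nn_integral_cmult[symmetric]) (auto intro!: nn_integral_cong simp: indicator_def)
  also have "\<dots> = c * emeasure (density lebesgue (\<lambda>x. ennreal (v x))) {x. ennreal t < Mw w g x}"
    by (subst emeasure_density) auto
  also have "\<dots> \<le> c * (ennreal (2 * Cw / t)
      * (\<integral>\<^sup>+ x. ennreal (\<bar>g x\<bar> * v x) * indicator {t. 0 < t \<and> t < 2 * \<bar>g x\<bar>} t \<partial>lebesgue))"
    by (intro mult_left_mono Mw_level_set_v_bound[OF g True]) auto
  also have "\<dots> = (\<integral>\<^sup>+ x. c * ennreal (2 * Cw / t) * (ennreal (\<bar>g x\<bar> * v x) * indicator {t. 0 < t \<and> t < 2 * \<bar>g x\<bar>} t) \<partial>lebesgue)"
    by (subst nn_integral_cmult) (auto simp: mult.assoc)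
  finally show ?thesis .
qed (simp add: indicator_def)

(* Strong type: M_w is bounded on L^q(v) for q > 1 (Marcinkiewicz-type argument via the
   layer-cake formula, Tonelli and the level-set bound). *)
lemma Mw_strong_type:
  assumes g[measurable]: "g \<in> borel_measurable lebesgue" and q: "q > 1"
  shows "(\<integral>\<^sup>+ x. enn_powr (Mw w g x) q * ennreal (v x) \<partial>lebesgue)
     \<le> ennreal (2 powr q * Cw * q / (q - 1)) * (\<integral>\<^sup>+ x. ennreal (\<bar>g x\<bar> powr q * v x) \<partial>lebesgue)"
proof -
  interpret P: pair_sigma_finite "lebesgue :: 'a measure" "lborel :: real measure"
    by (rule pair_sigma_finite_lebesgue_lborel)
  define \<phi> where "\<phi> t = ennreal (q * t powr (q - 1))" for t :: real
  define kernel where "kernel x t = \<phi> t * ennreal (2 * Cw / t)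
      * (ennreal (\<bar>g x\<bar> * v x) * indicator {t. 0 < t \<and> t < 2 * \<bar>g x\<bar>} t)" for x t
  have "(\<integral>\<^sup>+ x. enn_powr (Mw w g x) q * ennreal (v x) \<partial>lebesgue)
      \<le> (\<integral>\<^sup>+ x. (\<integral>\<^sup>+ t. \<phi> t * indicator {t. 0 < t \<and> ennreal t < Mw w g x} t * ennreal (v x) \<partial>lborel) \<partial>lebesgue)"
  proof (rule nn_integral_mono)
    fix x
    have "enn_powr (Mw w g x) q * ennreal (v x)
       \<le> (\<integral>\<^sup>+ t. \<phi> t * indicator {t. 0 < t \<and> ennreal t < Mw w g x} t \<partial>lborel) * ennreal (v x)"
      unfolding \<phi>_def using q by (intro mult_right_mono enn_powr_le_layer_cake) auto
    also have "\<dots> = (\<integral>\<^sup>+ t. \<phi> t * indicator {t. 0 < t \<and> ennreal t < Mw w g x} t * ennreal (v x) \<partial>lborel)"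
      unfolding \<phi>_def by (rule nn_integral_multc[symmetric]) measurable
    finally show "enn_powr (Mw w g x) q * ennreal (v x) \<le> \<dots>" .
  qed
  also have "\<dots> = (\<integral>\<^sup>+ t. (\<integral>\<^sup>+ x. \<phi> t * indicator {t. 0 < t \<and> ennreal t < Mw w g x} t * ennreal (v x) \<partial>lebesgue) \<partial>lborel)"
    by (rule P.Fubini'[symmetric]) (unfold \<phi>_def, measurable)
  also have "\<dots> \<le> (\<integral>\<^sup>+ t. (\<integral>\<^sup>+ x. kernel x t \<partial>lebesgue) \<partial>lborel)"
    unfolding kernel_def by (intro nn_integral_mono Mw_level_slice g)
  also have "\<dots> = (\<integral>\<^sup>+ x. (\<integral>\<^sup>+ t. kernel x t \<partial>lborel) \<partial>lebesgue)"
    unfolding kernel_def by (rule P.Fubini') (unfold \<phi>_def, measurable)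
  also have "\<dots> = (\<integral>\<^sup>+ x. ennreal (2 powr q * Cw * q / (q - 1)) * ennreal (\<bar>g x\<bar> powr q * v x) \<partial>lebesgue)"
    unfolding kernel_def \<phi>_def using q Cw_pos
    by (intro nn_integral_cong nn_integral_layer_kernel) auto
  also have "\<dots> = ennreal (2 powr q * Cw * q / (q - 1)) * (\<integral>\<^sup>+ x. ennreal (\<bar>g x\<bar> powr q * v x) \<partial>lebesgue)"
    by (rule nn_integral_cmult) measurable
  finally show ?thesis .
qed

end

lemma enn_powr_ennreal: "a \<ge> 0 \<Longrightarrow> enn_powr (ennreal a) q = ennreal (a powr q)"
  by (simp add: enn_powr_def)

lemma enn_powr_mono:
  assumes "a \<le> b" "q > 0" shows "enn_powr a q \<le> enn_powr b q"
proof (cases "b = top")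
  case True then show ?thesis by (simp add: enn_powr_def)
next
  case False
  then have "a \<noteq> top" using assms(1) by (auto simp: top_unique)
  then show ?thesis using False assms
    by (cases a; cases b) (auto simp: enn_powr_def ennreal_le_iff intro!: ennreal_leI powr_mono2)
qed

lemma enn_powr_add_le:
  assumes q: "q > 0"
  shows "enn_powr (a + b) q \<le> ennreal (2 powr q) * (enn_powr a q + enn_powr b q)"
proof (cases "a = top \<or> b = top")
  case True
  then show ?thesis by (auto simp: enn_powr_def ennreal_mult_top)
next
  case False
  then obtain x y where xy: "a = ennreal x" "b = ennreal y" "x \<ge> 0" "y \<ge> 0"
    by (cases a; cases b) auto
  have "(x + y) powr q \<le> (2 * max x y) powr q" using xy q by (intro powr_mono2) auto
  also have "\<dots> = 2 powr q * (max x y) powr q" using xy by (simp add: powr_mult)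
  also have "(max x y) powr q \<le> x powr q + y powr q"
    by (cases "x \<le> y") (auto simp: max_def)
  then have "2 powr q * (max x y) powr q \<le> 2 powr q * (x powr q + y powr q)" by simp
  finally have "(x + y) powr q \<le> 2 powr q * (x powr q + y powr q)" .
  then show ?thesis using xy
    by (simp add: enn_powr_def ennreal_plus[symmetric] ennreal_mult[symmetric] ennreal_leI del: ennreal_plus)
qed

lemma morrey_norm_cube_bound:
  fixes v w :: "'a::euclidean_space \<Rightarrow> real" and g :: "'a \<Rightarrow> ennreal"
  assumes N: "morrey_norm q k v w g = ennreal Nr" and q: "q > 0"
    and Q: "is_cube Q" and WQ: "wmeas w Q > 0"
  shows "(\<integral>\<^sup>+ x. enn_powr (g x) q * ennreal (v x) * indicator Q x \<partial>lebesgue)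
     \<le> ennreal (Nr powr q * wmeas w Q powr k)"
proof -
  define I where "I = (\<integral>\<^sup>+ x. enn_powr (g x) q * ennreal (v x) * indicator Q x \<partial>lebesgue)"
  define WK where "WK = wmeas w Q powr k"
  have WKp: "WK > 0" using WQ by (simp add: WK_def)
  have le: "enn_powr (I / ennreal WK) (1 / q) \<le> ennreal Nr"
    unfolding N[symmetric] morrey_norm_def I_def WK_def using Q by (intro SUP_upper2[of Q]) auto
  show ?thesis
  proof (cases "I / ennreal WK = top")
    case True
    then have "top \<le> ennreal Nr" using le by (simp add: enn_powr_def)
    then show ?thesis by (simp add: top_unique)
  next
    case False
    then obtain y where y: "I / ennreal WK = ennreal y" "y \<ge> 0" by (cases "I / ennreal WK") auto
    have "ennreal (y powr (1 / q)) \<le> ennreal Nr" using le y by (simp add: enn_powr_def)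
    then have "y powr (1 / q) \<le> max 0 Nr"
      by (metis ennreal_le_iff ennreal_max_0 max.cobounded1)
    then have "(y powr (1 / q)) powr q \<le> (max 0 Nr) powr q" using q by (intro powr_mono2) auto
    then have yle: "y \<le> (max 0 Nr) powr q" using y q by (simp add: powr_powr)
    have "I = (I / ennreal WK) * ennreal WK"
    proof -
      have "(I / ennreal WK) * ennreal WK = I * (ennreal WK / ennreal WK)" by (rule ennreal_divide_times)
      also have "ennreal WK / ennreal WK = 1"
        using mult_divide_eq_ennreal[of "ennreal WK" 1] WKp by simp
      finally show ?thesis by simp
    qed
    also have "\<dots> = ennreal (y * WK)" using y WKp by (simp add: ennreal_mult)
    also have "\<dots> \<le> ennreal ((max 0 Nr) powr q * WK)"
      using yle WKp by (intro ennreal_leI mult_right_mono) auto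
    finally have "I \<le> ennreal ((max 0 Nr) powr q * WK)" .
    moreover have "ennreal ((max 0 Nr) powr q * WK) \<le> ennreal (Nr powr q * WK)"
    proof (cases "Nr \<ge> 0")
      case True then show ?thesis by simp
    next
      case False then show ?thesis by simp
    qed
    ultimately show ?thesis unfolding I_def WK_def by (rule order.trans)
  qed
qed

lemma morrey_norm_le_of_cube_bounds:
  fixes u v :: "'a::euclidean_space \<Rightarrow> real" and g :: "'a \<Rightarrow> ennreal"
  assumes q: "q > 0" and v: "is_weight v" and B: "B \<ge> 0"
    and local: "\<And>a l. l > 0 \<Longrightarrow> (\<integral>\<^sup>+ x. enn_powr (g x) q * ennreal (u x) * indicator (cube a l) x \<partial>lebesgue)
        \<le> ennreal (B * wmeas v (cube a l) powr k)"
  shows "morrey_norm q k u v g \<le> ennreal (B powr (1 / q))"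
  unfolding morrey_norm_def
proof (rule SUP_least)
  fix Q :: "'a set" assume "Q \<in> {Q. is_cube Q}"
  then obtain a l where al: "l > 0" "Q = cube a l" by (auto simp: is_cube_iff)
  define E where "E = wmeas v Q powr k"
  have Ep: "E > 0" using weight_cube_integral(2)[OF v al(1), of a] al(2) by (simp add: E_def)
  have "(\<integral>\<^sup>+ x. enn_powr (g x) q * ennreal (u x) * indicator Q x \<partial>lebesgue) / ennreal E
      \<le> ennreal (B * E) / ennreal E"
    using local[OF al(1), of a] unfolding al(2) E_def by (rule divide_right_mono_ennreal)
  also have "\<dots> = ennreal B" using Ep B by (simp add: divide_ennreal)
  finally have "enn_powr ((\<integral>\<^sup>+ x. enn_powr (g x) q * ennreal (u x) * indicator Q x \<partial>lebesgue) / ennreal E) (1 / q)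
      \<le> enn_powr (ennreal B) (1 / q)"
    using q by (intro enn_powr_mono) auto
  then show "enn_powr ((\<integral>\<^sup>+ x. enn_powr (g x) q * ennreal (u x) * indicator Q x \<partial>lebesgue)
      / ennreal (wmeas v Q powr k)) (1 / q) \<le> ennreal (B powr (1 / q))"
    using B by (simp add: E_def enn_powr_ennreal)
qed

definition morrey_bounded :: "real \<Rightarrow> real \<Rightarrow> ('a::euclidean_space \<Rightarrow> real) \<Rightarrow> ('a \<Rightarrow> real)
    \<Rightarrow> ('a \<Rightarrow> real) \<Rightarrow> real \<Rightarrow> bool" where
  "morrey_bounded q k u v f N \<longleftrightarrow> (\<forall>a l. l > 0 \<longrightarrow>
     wint u (\<lambda>x. \<bar>f x\<bar> powr q) (cube a l) \<le> ennreal (N powr q * wmeas v (cube a l) powr k))"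

lemma morrey_bounded_of_norm:
  fixes u v f :: "'a::euclidean_space \<Rightarrow> real"
  assumes N: "morrey_norm q k u v (\<lambda>x. ennreal \<bar>f x\<bar>) = ennreal N" and q: "q > 0" and v: "is_weight v"
  shows "morrey_bounded q k u v f N"
  unfolding morrey_bounded_def
proof (intro allI impI)
  fix a :: 'a and l :: real assume l: "l > 0"
  have "(\<integral>\<^sup>+ x. enn_powr (ennreal \<bar>f x\<bar>) q * ennreal (u x) * indicator (cube a l) x \<partial>lebesgue)
      \<le> ennreal (N powr q * wmeas v (cube a l) powr k)"
    using l by (intro morrey_norm_cube_bound[OF N q] weight_cube_integral(2)[OF v]) (auto simp: is_cube_iff)
  then show "wint u (\<lambda>x. \<bar>f x\<bar> powr q) (cube a l) \<le> ennreal (N powr q * wmeas v (cube a l) powr k)"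
    by (simp add: wint_def enn_powr_ennreal ennreal_mult')
qed

lemma powr_trade_ratio:
  fixes W0 W s k :: real
  assumes "W0 > 0" "W > 0"
  shows "W0 powr s * W powr (k * s) = (W0 / W) powr (s * (1 - k)) * (W powr s * W0 powr (k * s))"
proof -
  have "W0 powr s = W0 powr (s * (1 - k)) * W0 powr (k * s)" "W powr s = W powr (s * (1 - k)) * W powr (k * s)"
    using assms by (simp_all add: powr_add[symmetric] algebra_simps)
  then show ?thesis using assms by (simp add: powr_divide field_simps)
qed

lemma powr_one_minus_ratio:
  fixes L0 L s :: real
  assumes "L0 > 0" "L > 0"
  shows "L0 powr (1 - s) = (L / L0) powr (s - 1) * L powr (1 - s)"
  using assms by (simp add: powr_divide powr_diff field_simps)

lemma decay_factor_le:
  fixes \<rho> X E b e s :: real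
  assumes \<rho>: "\<rho> \<ge> 1" and X: "X > 0" "X \<le> E * \<rho> powr (- b)" and e: "e > 0"
    and ex: "s - 1 - b * e \<le> 0"
  shows "\<rho> powr (s - 1) * X powr e \<le> E powr e"
proof -
  have E: "E > 0" using X \<rho> by (smt (verit) powr_gt_zero zero_less_mult_pos2)
  have "\<rho> powr (s - 1) * X powr e \<le> \<rho> powr (s - 1) * (E * \<rho> powr (- b)) powr e"
    using X e by (intro mult_left_mono powr_mono2) auto
  also have "\<dots> = E powr e * \<rho> powr (s - 1 - b * e)"
    using E \<rho> by (simp add: powr_mult powr_powr powr_add[symmetric] algebra_simps)
  also have "\<dots> \<le> E powr e * \<rho> powr 0" using \<rho> ex by (intro mult_left_mono powr_mono) auto
  finally show ?thesis using \<rho> by simp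
qed

(* With \<rho> = |Q|/|Q_0| \<ge> 1, the A_1 bound
   for v on Q_0 (h1), Jensen on Q (h2) and the reverse Hoelder decay
   w(Q_0)/w(Q) \<le> E \<rho>^(-b) (h3) combine, because s - 1 \<le> b s (1-k), to
   v(Q_0) w(Q)^(ks) \<le> C1 E^(s(1-k)) v(Q) w(Q_0)^(ks). *)
lemma far_cube_exponent_estimate:
  fixes L0 L W0 W V0 V s k b C1 E :: real
  assumes pos: "L0 > 0" "W0 > 0" "W > 0" "V0 > 0" "V > 0" "C1 > 0" "E > 0"
    and LL: "L0 \<le> L" and s: "s > 1" and k: "0 < k" "k < 1" and b: "b \<ge> 0"
    and ex: "s - 1 - b * (s * (1 - k)) \<le> 0"
    and h1: "V0 \<le> C1 * L0 powr (1 - s) * W0 powr s"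
    and h2: "W powr s \<le> L powr (s - 1) * V"
    and h3: "W0 / W \<le> E * (L / L0) powr (- b)"
  shows "V0 * W powr (k * s) \<le> C1 * E powr (s * (1 - k)) * V * W0 powr (k * s)"
proof -
  define \<rho> where "\<rho> = L / L0"
  define X where "X = W0 / W"
  define e where "e = s * (1 - k)"
  have Lp: "L > 0" using pos LL by simp
  have decay: "\<rho> powr (s - 1) * X powr e \<le> E powr e"
    using LL pos h3 s k ex unfolding \<rho>_def X_def e_def by (intro decay_factor_le) auto
  have LV: "L powr (1 - s) * W powr s \<le> V"
  proof -
    have "L powr (1 - s) * W powr s \<le> L powr (1 - s) * (L powr (s - 1) * V)"
      using h2 by (intro mult_left_mono) auto
    also have "\<dots> = V" using Lp by (simp add: powr_add[symmetric])
    finally show ?thesis .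
  qed
  have "V0 * W powr (k * s) \<le> C1 * L0 powr (1 - s) * W0 powr s * W powr (k * s)"
    using h1 by (intro mult_right_mono) auto
  also have "\<dots> = C1 * (\<rho> powr (s - 1) * X powr e) * (L powr (1 - s) * W powr s) * W0 powr (k * s)"
    using powr_trade_ratio[of W0 W s k] powr_one_minus_ratio[of L0 L s] pos Lp
    by (simp add: \<rho>_def X_def e_def algebra_simps)
  also have "\<dots> \<le> C1 * E powr e * V * W0 powr (k * s)"
    using LV decay pos by (intro mult_right_mono mult_left_mono mult_mono) auto
  finally show ?thesis by (simp add: e_def)
qed

lemma nn_integral_set_integrable:
  fixes f :: "'b \<Rightarrow> real"
  assumes int: "set_integrable M Q f" and nn: "\<And>x. 0 \<le> f x"
  shows "(\<integral>\<^sup>+ x. ennreal (f x) * indicator Q x \<partial>M) = ennreal (LINT x:Q|M. f x)"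
proof -
  have "(\<integral>\<^sup>+ x. ennreal (f x) * indicator Q x \<partial>M) = (\<integral>\<^sup>+ x. ennreal (indicator Q x *\<^sub>R f x) \<partial>M)"
    by (intro nn_integral_cong) (auto simp: indicator_def)
  also have "\<dots> = ennreal (integral\<^sup>L M (\<lambda>x. indicator Q x *\<^sub>R f x))"
    using int nn unfolding set_integrable_def by (intro nn_integral_eq_integral) auto
  finally show ?thesis by (simp add: set_lebesgue_integral_def)
qed

lemma RH_ratio_estimate:
  fixes L0 L LT r CR WT D W W0 :: real
  assumes pos: "L0 > 0" "L > 0" "W > 0" "CR > 0" "WT \<ge> 0" and LT: "LT \<ge> L" and r: "r > 1"
    and h: "W0 \<le> (L0 powr (r - 1) * LT) powr (1 / r) * (CR * WT / LT)"
    and d: "WT \<le> D * W"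
  shows "W0 / W \<le> (CR * D) * (L / L0) powr (- (1 - 1 / r))"
proof -
  define b where "b = 1 - 1 / r"
  have b0: "b \<ge> 0" using r by (simp add: b_def)
  have LTp: "LT > 0" using LT pos by simp
  have e: "(L0 powr (r - 1) * LT) powr (1 / r) / LT = (L0 / LT) powr b"
  proof -
    have bb: "(r - 1) / r = b" using r by (simp add: b_def field_simps)
    have e1: "(L0 powr (r - 1) * LT) powr (1 / r) = L0 powr b * LT powr (1 / r)"
      using pos LTp by (simp add: powr_mult powr_powr bb[symmetric])
    have e2: "LT powr (1 / r) / LT = 1 / LT powr b"
    proof -
      have "LT powr (1 / r) * LT powr b = LT powr 1" using r LTp by (simp add: powr_add[symmetric] b_def)
      then show ?thesis using LTp by (simp add: field_simps)
    qed
    have "(L0 powr (r - 1) * LT) powr (1 / r) / LT = L0 powr b * (LT powr (1 / r) / LT)"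
      unfolding e1 by simp
    also have "\<dots> = L0 powr b / LT powr b" unfolding e2 by simp
    also have "\<dots> = (L0 / LT) powr b" using pos LTp by (simp add: powr_divide)
    finally show ?thesis .
  qed
  have "W0 \<le> ((L0 powr (r - 1) * LT) powr (1 / r) / LT) * (CR * WT)" using h by (simp add: field_simps)
  also have "\<dots> = (L0 / LT) powr b * (CR * WT)" by (simp add: e)
  also have "\<dots> \<le> (L0 / L) powr b * (CR * (D * W))"
  proof (rule mult_mono)
    show "(L0 / LT) powr b \<le> (L0 / L) powr b" using pos LT b0 by (intro powr_mono2 divide_left_mono) auto
    show "CR * WT \<le> CR * (D * W)" using d pos by (intro mult_left_mono) auto
  qed (use pos in auto)
  finally have "W0 \<le> (L0 / L) powr b * (CR * (D * W))" .
  moreover have "(L0 / L) powr b = (L / L0) powr (- b)"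
    using pos by (simp add: powr_minus_divide powr_divide)
  ultimately have "W0 \<le> (CR * D) * (L / L0) powr (- b) * W" by (simp add: algebra_simps)
  then show ?thesis using pos by (simp add: b_def pos_divide_le_eq)
qed

lemma enn_divide_le_of_enn_powr_le:
  assumes X: "enn_powr X q \<le> ennreal (W powr q * B)" and q: "q > 0" and W: "W > 0" and B: "B \<ge> 0"
  shows "X / ennreal W \<le> ennreal (B powr (1 / q))"
proof -
  have "X \<noteq> top" using X by (auto simp: enn_powr_def top_unique)
  then obtain A where A: "X = ennreal A" "A \<ge> 0" by (cases X) auto
  have "A powr q \<le> W powr q * B" using X A W B by (simp add: enn_powr_def ennreal_le_iff)
  then have "(A / W) powr q \<le> B" using A W by (simp add: powr_divide divide_le_eq mult.commute)
  then have "((A / W) powr q) powr (1 / q) \<le> B powr (1 / q)" using q by (intro powr_mono2) auto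
  then have "A / W \<le> B powr (1 / q)" using A W q by (simp add: powr_powr)
  then show ?thesis using A W by (simp add: divide_ennreal ennreal_leI)
qed

(* The full setting of the theorem: in addition w \<in> RH_r with constant CR, and the
   Morrey exponent k s (0 < k < 1) satisfies s - 1 \<le> (1 - 1/r) s (1 - k), which is
   the condition r > (1-\<kappa>)/(p/q-\<kappa>) of the theorem. *)
locale Morrey_setting = A1_power w s C1 for w :: "'a::euclidean_space \<Rightarrow> real" and s C1 :: real +
  fixes r CR k :: real
  assumes r1: "r > 1" and CRpos: "CR > 0"
    and RHw: "\<And>Q. is_cube Q \<Longrightarrow> set_integrable lebesgue Q (\<lambda>x. w x powr r) \<and>
        ((LINT x:Q|lebesgue. w x powr r) / measure lebesgue Q) powr (1 / r) \<le> CR * (wmeas w Q / measure lebesgue Q)"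
    and k: "0 < k" "k < 1"
    and exponent: "s - 1 - (1 - 1 / r) * (s * (1 - k)) \<le> 0"
begin

lemma RH_nn_integral:
  assumes m: "m > 0"
  shows "(\<integral>\<^sup>+ x. ennreal (w x powr r) * indicator (cube b m) x \<partial>lebesgue)
     \<le> ennreal (m ^ DIM('a) * (CR * (wmeas w (cube b m) / m ^ DIM('a))) powr r)"
proof -
  define LT where "LT = m ^ DIM('a)"
  define AT where "AT = (LINT x:cube b m|lebesgue. w x powr r)"
  have LTp: "LT > 0" using m by (simp add: LT_def)
  have RH: "set_integrable lebesgue (cube b m) (\<lambda>x. w x powr r)"
    "(AT / LT) powr (1 / r) \<le> CR * (wmeas w (cube b m) / LT)"
    using RHw[of "cube b m"] m by (auto simp: is_cube_iff AT_def LT_def measure_cube)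
  have AT0: "AT \<ge> 0" unfolding AT_def set_lebesgue_integral_def
    by (intro integral_nonneg_AE) auto
  have "AT / LT = ((AT / LT) powr (1 / r)) powr r" using AT0 LTp r1 by (simp add: powr_powr)
  also have "\<dots> \<le> (CR * (wmeas w (cube b m) / LT)) powr r" using RH(2) r1 by (intro powr_mono2) auto
  finally have "AT \<le> LT * (CR * (wmeas w (cube b m) / LT)) powr r"
    using LTp by (simp add: pos_divide_le_eq mult.commute)
  moreover have "(\<integral>\<^sup>+ x. ennreal (w x powr r) * indicator (cube b m) x \<partial>lebesgue) = ennreal AT"
    unfolding AT_def by (rule nn_integral_set_integrable[OF RH(1)]) simp
  ultimately show ?thesis by (simp add: LT_def ennreal_leI)
qed

(* Reverse Hoelder combined with Jensen on a subcube Q_0 of T: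
   w(Q_0) \<le> (|Q_0|^(r-1) |T|)^(1/r) CR w(T)/|T|. *)
lemma RH_bound:
  assumes l0: "l0 > 0" and m: "m > 0" and sub: "cube a0 l0 \<subseteq> cube b m"
  shows "wmeas w (cube a0 l0) \<le> ((l0 ^ DIM('a)) powr (r - 1) * m ^ DIM('a)) powr (1 / r)
            * (CR * wmeas w (cube b m) / m ^ DIM('a))"
proof -
  define W0 where "W0 = wmeas w (cube a0 l0)"
  define L0 where "L0 = l0 ^ DIM('a)"
  define LT where "LT = m ^ DIM('a)"
  define B where "B = CR * (wmeas w (cube b m) / LT)"
  have L0p: "L0 > 0" using l0 by (simp add: L0_def)
  have LTp: "LT > 0" using m by (simp add: LT_def)
  have W0p: "W0 > 0" using weight_cube_integral(2)[OF weight l0] by (simp add: W0_def)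
  have Bp: "B \<ge> 0" using CRpos weight_cube_integral(2)[OF weight m, of b] LTp by (simp add: B_def)
  have "ennreal (W0 powr r)
      \<le> ennreal (L0 powr (r - 1)) * (\<integral>\<^sup>+ x. ennreal (w x powr r) * indicator (cube a0 l0) x \<partial>lebesgue)"
    using wmeas_powr_le_nn_integral[OF weight l0, of r a0] r1 by (simp add: W0_def L0_def)
  also have "\<dots> \<le> ennreal (L0 powr (r - 1)) * (\<integral>\<^sup>+ x. ennreal (w x powr r) * indicator (cube b m) x \<partial>lebesgue)"
    using sub by (intro mult_left_mono nn_integral_mono) (auto simp: indicator_def)
  also have "\<dots> \<le> ennreal (L0 powr (r - 1)) * ennreal (LT * B powr r)"
    using RH_nn_integral[OF m, of b] by (intro mult_left_mono) (auto simp: LT_def B_def)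
  finally have "W0 powr r \<le> L0 powr (r - 1) * (LT * B powr r)"
    using L0p LTp by (simp add: ennreal_mult[symmetric] ennreal_le_iff)
  then have "(W0 powr r) powr (1 / r) \<le> (L0 powr (r - 1) * (LT * B powr r)) powr (1 / r)"
    using r1 by (intro powr_mono2) auto
  also have "(L0 powr (r - 1) * (LT * B powr r)) powr (1 / r) = (L0 powr (r - 1) * LT) powr (1 / r) * B"
    using L0p LTp Bp r1 by (simp add: powr_mult powr_powr mult.assoc)
  finally show ?thesis using W0p r1 by (simp add: powr_powr W0_def L0_def LT_def B_def)
qed

definition "Cgeo = C1 * (CR * Cd) powr (s * (1 - k))"

lemma Cgeo_pos: "Cgeo > 0" using C1pos CRpos Cd_pos by (simp add: Cgeo_def)

lemma far_cube_measure_estimate: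
  assumes l0: "l0 > 0" and lm: "l0 \<le> m" and x0: "x \<in> cube a0 l0" and xb: "x \<in> cube b m"
  shows "wmeas v (cube a0 l0) * wmeas w (cube b m) powr (k * s)
     \<le> Cgeo * wmeas v (cube b m) * wmeas w (cube a0 l0) powr (k * s)"
proof -
  have m: "m > 0" using l0 lm by simp
  have m3: "3 * m > 0" using m by simp
  define T where "T = cube (b - m *\<^sub>R One) (3 * m)"
  have Q0T: "cube a0 l0 \<subseteq> T" unfolding T_def by (rule cube_subset_triple_of_meeting[OF xb x0 lm])
  define W0 where "W0 = wmeas w (cube a0 l0)"
  define V0 where "V0 = wmeas v (cube a0 l0)"
  define W where "W = wmeas w (cube b m)"
  define V where "V = wmeas v (cube b m)"
  define WT where "WT = wmeas w T"
  define L0 where "L0 = l0 ^ DIM('a)"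
  define L where "L = m ^ DIM('a)"
  define LT where "LT = (3 * m) ^ DIM('a)"
  have pos: "L0 > 0" "W0 > 0" "W > 0" "V0 > 0" "V > 0" "WT > 0" "L > 0"
    using weight_cube_integral(2)[OF weight l0] weight_cube_integral(2)[OF vweight l0] weight_cube_integral(2)[OF weight m]
      weight_cube_integral(2)[OF vweight m] weight_cube_integral(2)[OF weight m3] l0 m
    by (auto simp: W0_def V0_def W_def V_def WT_def T_def L0_def L_def)
  have LL: "L0 \<le> L" using l0 lm by (simp add: L0_def L_def power_mono)
  have LTL: "LT \<ge> L" using m by (simp add: LT_def L_def power_mono)
  have RHb: "W0 \<le> (L0 powr (r - 1) * LT) powr (1 / r) * (CR * WT / LT)"
    using RH_bound[OF l0 m3 Q0T[unfolded T_def]] by (simp add: W0_def L0_def LT_def WT_def T_def)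
  have triple: "WT \<le> Cd * W" unfolding WT_def W_def T_def by (rule wmeas_triple_le[OF m])
  have h3: "W0 / W \<le> (CR * Cd) * (L / L0) powr (- (1 - 1 / r))"
    by (rule RH_ratio_estimate[OF pos(1) pos(7) pos(3) CRpos _ LTL r1 RHb triple]) (use pos in simp)
  have h1: "V0 \<le> C1 * L0 powr (1 - s) * W0 powr s"
    using wmeas_v_upper[OF l0, of a0] by (simp add: V0_def L0_def W0_def)
  have h2: "W powr s \<le> L powr (s - 1) * V"
    using wmeas_w_powr_le[OF m, of b] by (simp add: W_def L_def V_def)
  have "V0 * W powr (k * s) \<le> C1 * (CR * Cd) powr (s * (1 - k)) * V * W0 powr (k * s)"
    using CRpos Cd_pos r1
    by (intro far_cube_exponent_estimate[OF pos(1,2,3,4,5) C1pos _ LL s1 k _ exponent h1 h2 h3]) auto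
  then show ?thesis by (simp add: V0_def W_def V_def W0_def Cgeo_def)
qed

(* Averages over a far cube Q (side at least that of Q_0, meeting Q_0) of a Morrey-bounded f:
   by Jensen, the A_1 comparison, the Morrey bound on Q and the measure estimate,
   (w(Q)^(-1) \<integral>_Q |f| w)^q \<le> C1 Cgeo N^q w(Q_0)^(ks) / v(Q_0). *)
lemma far_cube_average_bound:
  assumes f[measurable]: "f \<in> borel_measurable lebesgue" and q: "q > 1" and N: "N \<ge> 0"
    and mb: "morrey_bounded q (k * s) v w f N"
    and l0: "l0 > 0" and lm: "l0 \<le> m" and x0: "x \<in> cube a0 l0" and xb: "x \<in> cube b m"
  shows "wint w f (cube b m) / ennreal (wmeas w (cube b m))
     \<le> ennreal ((C1 * Cgeo * N powr q * wmeas w (cube a0 l0) powr (k * s) / wmeas v (cube a0 l0)) powr (1 / q))"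
proof -
  have m: "m > 0" using l0 lm by simp
  define Q where "Q = cube b m"
  define W where "W = wmeas w Q"
  define V where "V = wmeas v Q"
  define W0 where "W0 = wmeas w (cube a0 l0)"
  define V0 where "V0 = wmeas v (cube a0 l0)"
  define B where "B = C1 * Cgeo * N powr q * W0 powr (k * s) / V0"
  have Wp: "W > 0" using weight_cube_integral(2)[OF weight m] by (simp add: W_def Q_def)
  have Vp: "V > 0" using weight_cube_integral(2)[OF vweight m] by (simp add: V_def Q_def)
  have V0p: "V0 > 0" using weight_cube_integral(2)[OF vweight l0] by (simp add: V0_def)
  have B0: "B \<ge> 0" using C1pos Cgeo_pos V0p by (simp add: B_def)
  have "enn_powr (wint w f Q) q
      \<le> ennreal (W powr (q - 1)) * (\<integral>\<^sup>+ x. ennreal (\<bar>f x\<bar> powr q * w x) * indicator Q x \<partial>lebesgue)"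
    unfolding wint_def using q w_pos_AE Wp weight_cube_integral(1)[OF weight m, of b]
    by (intro jensen_powr_nn_integral[of q "\<lambda>x. \<bar>f x\<bar>"]) (auto elim!: eventually_mono simp: W_def Q_def)
  then have jensen: "enn_powr (wint w f Q) q \<le> ennreal (W powr (q - 1)) * wint w (\<lambda>x. \<bar>f x\<bar> powr q) Q"
    by (simp add: wint_def)
  have compare: "wint w (\<lambda>x. \<bar>f x\<bar> powr q) Q \<le> ennreal (C1 * W / V) * wint v (\<lambda>x. \<bar>f x\<bar> powr q) Q"
    unfolding W_def V_def Q_def by (intro wint_w_le_wint_v m) auto
  have morrey: "wint v (\<lambda>x. \<bar>f x\<bar> powr q) Q \<le> ennreal (N powr q * W powr (k * s))"
    using mb m unfolding morrey_bounded_def Q_def W_def by blast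
  have geo: "V0 * W powr (k * s) \<le> Cgeo * V * W0 powr (k * s)"
    using far_cube_measure_estimate[OF l0 lm x0 xb] by (simp add: V0_def W_def V_def W0_def Q_def)
  have "enn_powr (wint w f Q) q \<le> ennreal (W powr (q - 1)) * (ennreal (C1 * W / V) * ennreal (N powr q * W powr (k * s)))"
    using jensen compare morrey by (meson mult_left_mono order.trans zero_le)
  also have "\<dots> = ennreal (C1 * N powr q * (W powr (q - 1) * W) * (W powr (k * s) / V))"
    using C1pos Wp Vp by (simp add: ennreal_mult[symmetric] field_simps)
  also have "W powr (q - 1) * W = W powr q" using Wp powr_add[of W "q - 1" 1] by simp
  also have "C1 * N powr q * W powr q * (W powr (k * s) / V) \<le> W powr q * B"
  proof -
    have "W powr (k * s) / V \<le> Cgeo * W0 powr (k * s) / V0"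
      using geo Vp V0p by (simp add: field_simps)
    then have "C1 * N powr q * W powr q * (W powr (k * s) / V)
        \<le> C1 * N powr q * W powr q * (Cgeo * W0 powr (k * s) / V0)"
      using C1pos by (intro mult_left_mono) auto
    then show ?thesis by (simp add: B_def ac_simps)
  qed
  finally have "enn_powr (wint w f Q) q \<le> ennreal (W powr q * B)" by (simp add: ennreal_leI)
  then show ?thesis
    using enn_divide_le_of_enn_powr_le q Wp B0 unfolding Q_def W_def B_def W0_def V0_def by auto
qed

(* Pointwise splitting on Q_0: cubes containing x \<in> Q_0 are either no larger than Q_0,
   hence inside 3Q_0 where only f 1_{3Q_0} matters, or far cubes. *)
lemma Mw_split_near_far:
  assumes f[measurable]: "f \<in> borel_measurable lebesgue" and q: "q > 1" and N: "N \<ge> 0"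
    and mb: "morrey_bounded q (k * s) v w f N"
    and l0: "l0 > 0" and x0: "x \<in> cube a0 l0"
  shows "Mw w f x \<le> Mw w (\<lambda>y. f y * indicator (cube (a0 - l0 *\<^sub>R One) (3 * l0)) y) x
     + ennreal ((C1 * Cgeo * N powr q * wmeas w (cube a0 l0) powr (k * s) / wmeas v (cube a0 l0)) powr (1 / q))"
    (is "_ \<le> Mw w ?f1 x + ennreal ?K")
proof (rule Mw_le_bound)
  fix b m assume m: "m > 0" and xb: "x \<in> cube b m"
  show "wint w f (cube b m) / ennreal (wmeas w (cube b m)) \<le> Mw w ?f1 x + ennreal ?K"
  proof (cases "m \<le> l0")
    case True
    have sub: "cube b m \<subseteq> cube (a0 - l0 *\<^sub>R One) (3 * l0)" by (rule cube_subset_triple_of_meeting[OF x0 xb True])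
    have "wint w f (cube b m) = wint w ?f1 (cube b m)"
      unfolding wint_def using sub by (intro nn_integral_cong) (auto simp: indicator_def)
    then have "wint w f (cube b m) / ennreal (wmeas w (cube b m)) \<le> Mw w ?f1 x"
      using Mw_ge_average[OF m xb, of w ?f1] by simp
    then show ?thesis by (simp add: add_increasing2)
  next
    case False
    then have "wint w f (cube b m) / ennreal (wmeas w (cube b m)) \<le> ennreal ?K"
      using far_cube_average_bound[OF f q N mb l0 _ x0 xb] by simp
    then show ?thesis by (simp add: add_increasing)
  qed
qed

end

context Morrey_setting begin

(* The near part f 1_{3Q_0} is handled by the L^q(v) bound and the Morrey bound on 3Q_0. *)
lemma near_part_bound:
  assumes f[measurable]: "f \<in> borel_measurable lebesgue" and q: "q > 1" and N: "N \<ge> 0"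
    and mb: "morrey_bounded q (k * s) v w f N" and l0: "l0 > 0"
  shows "(\<integral>\<^sup>+ x. enn_powr (Mw w (\<lambda>y. f y * indicator (cube (a0 - l0 *\<^sub>R One) (3 * l0)) y) x) q
            * ennreal (v x) \<partial>lebesgue)
     \<le> ennreal (2 powr q * Cw * q / (q - 1) * (N powr q * (Cd * wmeas w (cube a0 l0)) powr (k * s)))"
proof -
  define T0 where "T0 = cube (a0 - l0 *\<^sub>R One) (3 * l0)"
  define f1 where "f1 = (\<lambda>y. f y * indicator T0 y)"
  define KS where "KS = 2 powr q * Cw * q / (q - 1)"
  have l3: "3 * l0 > 0" using l0 by simp
  have KS0: "KS \<ge> 0" using Cw_pos q by (simp add: KS_def)
  have f1m[measurable]: "f1 \<in> borel_measurable lebesgue" unfolding f1_def T0_def by measurable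
  have "(\<integral>\<^sup>+ x. enn_powr (Mw w f1 x) q * ennreal (v x) \<partial>lebesgue)
      \<le> ennreal KS * (\<integral>\<^sup>+ x. ennreal (\<bar>f1 x\<bar> powr q * v x) \<partial>lebesgue)"
    unfolding KS_def by (rule Mw_strong_type[OF f1m q])
  also have "(\<integral>\<^sup>+ x. ennreal (\<bar>f1 x\<bar> powr q * v x) \<partial>lebesgue) = wint v (\<lambda>x. \<bar>f x\<bar> powr q) T0"
    unfolding wint_def using q by (intro nn_integral_cong) (auto simp: f1_def indicator_def)
  also have "\<dots> \<le> ennreal (N powr q * wmeas w T0 powr (k * s))"
    using mb l3 unfolding morrey_bounded_def T0_def by blast
  also have "\<dots> \<le> ennreal (N powr q * (Cd * wmeas w (cube a0 l0)) powr (k * s))"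
    using k s1 wmeas_triple_le[OF l0, of a0] weight_cube_integral(2)[OF weight l3, of "a0 - l0 *\<^sub>R One"]
    unfolding T0_def by (intro ennreal_leI mult_left_mono powr_mono2) auto
  finally show ?thesis
    using KS0 by (simp add: f1_def T0_def KS_def ennreal_mult[symmetric] mult_left_mono)
qed

definition "Cmorrey q = 2 powr q * (2 powr q * Cw * q / (q - 1) * Cd powr (k * s) + C1 * Cgeo)"

lemma Cmorrey_pos: "q > 1 \<Longrightarrow> Cmorrey q > 0"
  using Cw_pos Cd_pos Cgeo_pos C1pos by (simp add: Cmorrey_def add_pos_pos)

lemma Mw_powr_split:
  assumes f[measurable]: "f \<in> borel_measurable lebesgue" and q: "q > 1" and N: "N \<ge> 0"
    and mb: "morrey_bounded q (k * s) v w f N" and l0: "l0 > 0" and x: "x \<in> cube a0 l0"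
  shows "enn_powr (Mw w f x) q \<le> ennreal (2 powr q) *
      (enn_powr (Mw w (\<lambda>y. f y * indicator (cube (a0 - l0 *\<^sub>R One) (3 * l0)) y) x) q
       + ennreal (C1 * Cgeo * N powr q * wmeas w (cube a0 l0) powr (k * s) / wmeas v (cube a0 l0)))"
proof -
  define f1 where "f1 = (\<lambda>y. f y * indicator (cube (a0 - l0 *\<^sub>R One) (3 * l0)) y)"
  define K where "K = C1 * Cgeo * N powr q * wmeas w (cube a0 l0) powr (k * s) / wmeas v (cube a0 l0)"
  have K0: "K \<ge> 0"
    using C1pos Cgeo_pos weight_cube_integral(2)[OF vweight l0, of a0] by (simp add: K_def)
  have "enn_powr (Mw w f x) q \<le> enn_powr (Mw w f1 x + ennreal (K powr (1 / q))) q"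
    using Mw_split_near_far[OF f q N mb l0 x] q by (intro enn_powr_mono) (auto simp: f1_def K_def)
  also have "\<dots> \<le> ennreal (2 powr q) * (enn_powr (Mw w f1 x) q + enn_powr (ennreal (K powr (1 / q))) q)"
    using q by (intro enn_powr_add_le) auto
  also have "enn_powr (ennreal (K powr (1 / q))) q = ennreal K"
    using K0 q by (simp add: enn_powr_ennreal powr_powr)
  finally show ?thesis by (simp add: f1_def K_def)
qed

lemma local_morrey_estimate:
  assumes f[measurable]: "f \<in> borel_measurable lebesgue" and q: "q > 1" and N: "N \<ge> 0"
    and mb: "morrey_bounded q (k * s) v w f N" and l0: "l0 > 0"
  shows "(\<integral>\<^sup>+ x. enn_powr (Mw w f x) q * ennreal (v x) * indicator (cube a0 l0) x \<partial>lebesgue)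
     \<le> ennreal (Cmorrey q * N powr q * wmeas w (cube a0 l0) powr (k * s))"
proof -
  define f1 where "f1 = (\<lambda>y. f y * indicator (cube (a0 - l0 *\<^sub>R One) (3 * l0)) y)"
  define W0 where "W0 = wmeas w (cube a0 l0)"
  define V0 where "V0 = wmeas v (cube a0 l0)"
  define far where "far = C1 * Cgeo * N powr q * W0 powr (k * s) / V0"
  define near where "near = 2 powr q * Cw * q / (q - 1) * (N powr q * (Cd * W0) powr (k * s))"
  have f1m[measurable]: "f1 \<in> borel_measurable lebesgue" unfolding f1_def by measurable
  have W0p: "W0 > 0" using weight_cube_integral(2)[OF weight l0] by (simp add: W0_def)
  have V0p: "V0 > 0" using weight_cube_integral(2)[OF vweight l0] by (simp add: V0_def)
  have near0: "near \<ge> 0" using Cw_pos Cd_pos W0p q by (simp add: near_def)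
  have far0: "far \<ge> 0" using C1pos Cgeo_pos V0p by (simp add: far_def)
  have "(\<integral>\<^sup>+ x. enn_powr (Mw w f x) q * ennreal (v x) * indicator (cube a0 l0) x \<partial>lebesgue)
      \<le> (\<integral>\<^sup>+ x. ennreal (2 powr q) * (enn_powr (Mw w f1 x) q * ennreal (v x))
            + ennreal (2 powr q * far) * (ennreal (v x) * indicator (cube a0 l0) x) \<partial>lebesgue)"
  proof (rule nn_integral_mono)
    fix x
    show "enn_powr (Mw w f x) q * ennreal (v x) * indicator (cube a0 l0) x
      \<le> ennreal (2 powr q) * (enn_powr (Mw w f1 x) q * ennreal (v x))
            + ennreal (2 powr q * far) * (ennreal (v x) * indicator (cube a0 l0) x)"
    proof (cases "x \<in> cube a0 l0")
      case True
      have "enn_powr (Mw w f x) q * ennreal (v x)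
          \<le> ennreal (2 powr q) * (enn_powr (Mw w f1 x) q + ennreal far) * ennreal (v x)"
        using Mw_powr_split[OF f q N mb l0 True] unfolding f1_def far_def W0_def V0_def
        by (intro mult_right_mono) auto
      then show ?thesis using True far0 by (simp add: algebra_simps ennreal_mult)
    qed simp
  qed
  also have "\<dots> = ennreal (2 powr q) * (\<integral>\<^sup>+ x. enn_powr (Mw w f1 x) q * ennreal (v x) \<partial>lebesgue)
       + ennreal (2 powr q * far) * ennreal V0"
    using weight_cube_integral(1)[OF vweight l0, of a0]
    by (subst nn_integral_add) (auto simp: nn_integral_cmult V0_def enn_powr_def)
  also have "\<dots> \<le> ennreal (2 powr q) * ennreal near + ennreal (2 powr q * far) * ennreal V0"
    using near_part_bound[OF f q N mb l0, of a0]
    by (intro add_right_mono mult_left_mono) (auto simp: f1_def near_def W0_def)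
  also have "\<dots> = ennreal (2 powr q * near + 2 powr q * far * V0)"
    using near0 far0 V0p by (simp add: ennreal_mult[symmetric] ennreal_plus[symmetric] del: ennreal_plus)
  also have "2 powr q * near + 2 powr q * far * V0 = Cmorrey q * N powr q * W0 powr (k * s)"
    using V0p Cd_pos W0p by (simp add: near_def far_def Cmorrey_def powr_mult field_simps)
  finally show ?thesis by (simp add: W0_def)
qed

theorem Mw_morrey_bounded:
  assumes f[measurable]: "f \<in> borel_measurable lebesgue" and q: "q > 1"
  shows "morrey_norm q (k * s) v w (Mw w f)
     \<le> ennreal (Cmorrey q powr (1 / q)) * morrey_norm q (k * s) v w (\<lambda>x. ennreal \<bar>f x\<bar>)"
proof (cases "morrey_norm q (k * s) v w (\<lambda>x. ennreal \<bar>f x\<bar>)")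
  case (real N)
  then have N: "N \<ge> 0" by simp
  have mb: "morrey_bounded q (k * s) v w f N"
    using real q by (intro morrey_bounded_of_norm[OF _ _ weight]) auto
  have "morrey_norm q (k * s) v w (Mw w f) \<le> ennreal ((Cmorrey q * N powr q) powr (1 / q))"
    using q Cmorrey_pos[OF q] N
    by (intro morrey_norm_le_of_cube_bounds[OF _ weight] local_morrey_estimate[OF f q N mb]) auto
  also have "(Cmorrey q * N powr q) powr (1 / q) = Cmorrey q powr (1 / q) * N"
    using Cmorrey_pos[OF q] N q by (simp add: powr_mult powr_powr)
  finally show ?thesis using real N by (simp add: ennreal_mult)
next
  case top
  then show ?thesis using Cmorrey_pos[OF q] by (simp add: ennreal_mult_top)
qed

end

lemma sobolev_exponent_gt:
  fixes n \<alpha> p q :: real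
  assumes n: "n > 0" and \<alpha>: "0 < \<alpha>" and p: "1 < p" "p < n / \<alpha>" and pq: "1 / q = 1 / p - \<alpha> / n"
  shows "p < q"
proof -
  have "p * \<alpha> < n" using p(2) \<alpha> by (simp add: pos_less_divide_eq mult.commute)
  then have "\<alpha> / n < 1 / p" using n p(1) by (simp add: field_simps)
  then have "0 < 1 / q" "1 / q < 1 / p" using pq \<alpha> n by simp_all
  then show ?thesis using p(1) by (simp add: field_simps zero_less_divide_iff)
qed

lemma morrey_exponent_condition:
  fixes p q \<kappa> r :: real
  assumes pq: "0 < p" "p < q" and \<kappa>: "\<kappa> < p / q" "\<kappa> < 1" and r: "r > 1" "(1 - \<kappa>) / (p / q - \<kappa>) < r"
  shows "q / p - 1 - (1 - 1 / r) * (q / p * (1 - \<kappa>)) \<le> 0"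
proof -
  have a0: "p / q - \<kappa> > 0" and k0: "1 - \<kappa> > 0" using \<kappa> by simp_all
  have "1 / r < 1 / ((1 - \<kappa>) / (p / q - \<kappa>))"
    using r a0 k0 by (intro divide_strict_left_mono) auto
  then have "1 / r * (1 - \<kappa>) < p / q - \<kappa>" using a0 k0 by (simp add: pos_less_divide_eq)
  then have "1 - p / q < (1 - 1 / r) * (1 - \<kappa>)" by (simp add: algebra_simps)
  then have "q / p * (1 - p / q) < q / p * ((1 - 1 / r) * (1 - \<kappa>))"
    using pq by (intro mult_strict_left_mono) auto
  moreover have "q / p * (1 - p / q) = q / p - 1" using pq by (simp add: field_simps)
  ultimately show ?thesis by (simp add: mult_ac)
qed

lemma RH_positive_constant:
  assumes RH: "RH r w" and w: "is_weight w"
  obtains CR where "CR > 0" and "\<And>Q. is_cube Q \<Longrightarrow> set_integrable lebesgue Q (\<lambda>x. w x powr r) \<and>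
     ((LINT x:Q|lebesgue. w x powr r) / measure lebesgue Q) powr (1 / r) \<le> CR * (wmeas w Q / measure lebesgue Q)"
proof -
  obtain C0 where C0: "\<And>Q. is_cube Q \<Longrightarrow> set_integrable lebesgue Q (\<lambda>x. w x powr r) \<and>
     ((LINT x:Q|lebesgue. w x powr r) / measure lebesgue Q) powr (1 / r) \<le> C0 * (wmeas w Q / measure lebesgue Q)"
    using RH unfolding RH_def by blast
  have "C0 * (wmeas w Q / measure lebesgue Q) \<le> max C0 1 * (wmeas w Q / measure lebesgue Q)"
    if Q: "is_cube Q" for Q
  proof -
    obtain a l where "l > 0" "Q = cube a l" using Q by (auto simp: is_cube_iff)
    then have "wmeas w Q / measure lebesgue Q \<ge> 0"
      using weight_cube_integral(2)[OF w, of l a] by (simp add: measure_cube)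
    then show ?thesis by (intro mult_right_mono) auto
  qed
  with C0 show ?thesis by (intro that[of "max C0 1"]) (auto intro: order.trans)
qed

theorem lemma3p5:
  fixes w :: "'a::euclidean_space \<Rightarrow> real"
    and \<alpha> p q \<kappa> :: real
  defines "n \<equiv> real DIM('a)"
  assumes "0 < \<alpha>" and "\<alpha> < n"
    and "1 < p" and "p < n / \<alpha>"
    and "1 / q = 1 / p - \<alpha> / n"
    and "0 < \<kappa>" and "\<kappa> < p / q"
    and "is_weight w"
    and "A1 (\<lambda>x. w x powr (q / p))"
    and "r_w w > ereal ((1 - \<kappa>) / (p / q - \<kappa>))"
  shows "\<exists>C::real. \<forall>f \<in> borel_measurable lebesgue.
    morrey_norm q (\<kappa> * q / p) (\<lambda>x. w x powr (q / p)) w (Mw w f)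
      \<le> ennreal C * morrey_norm q (\<kappa> * q / p) (\<lambda>x. w x powr (q / p)) w (\<lambda>x. ennreal \<bar>f x\<bar>)"
proof -
  note hyps = assms(2-)
  have qp: "p < q" using sobolev_exponent_gt[OF _ hyps(1,3,4,5)] by (simp add: n_def)
  then have q1: "q > 1" and s1: "q / p > 1" and "p / q < 1" using hyps(3) by simp_all
  then have \<kappa>1: "\<kappa> < 1" using hyps(7) by linarith
  obtain C1 where A1v: "is_weight (\<lambda>x. w x powr (q / p))" "\<And>Q. is_cube Q \<Longrightarrow> AE x in lebesgue. x \<in> Q \<longrightarrow>
        wmeas (\<lambda>x. w x powr (q / p)) Q / measure lebesgue Q \<le> C1 * w x powr (q / p)"
    using hyps(9) unfolding A1_def by blast
  obtain r where r: "r > 1" "RH r w" "(1 - \<kappa>) / (p / q - \<kappa>) < r"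
    using hyps(10) unfolding r_w_def less_Sup_iff by auto
  obtain CR where CR: "CR > 0" "\<And>Q. is_cube Q \<Longrightarrow> set_integrable lebesgue Q (\<lambda>x. w x powr r) \<and>
     ((LINT x:Q|lebesgue. w x powr r) / measure lebesgue Q) powr (1 / r) \<le> CR * (wmeas w Q / measure lebesgue Q)"
    using RH_positive_constant[OF r(2) hyps(8)] by blast
  have exponent: "q / p - 1 - (1 - 1 / r) * (q / p * (1 - \<kappa>)) \<le> 0"
    using morrey_exponent_condition[OF _ qp hyps(7) \<kappa>1 r(1,3)] hyps(3) by simp
  interpret M: Morrey_setting w "q / p" C1 r CR \<kappa>
    by unfold_locales (use hyps(6,8) s1 A1v r(1) CR \<kappa>1 exponent in auto)
  have "\<kappa> * q / p = \<kappa> * (q / p)" by simp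
  then show ?thesis using M.Mw_morrey_bounded[OF _ q1] by (intro exI[of _ "M.Cmorrey q powr (1 / q)"]) simp
qed

end
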